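(* Let $\Theta$ be an $N$-tuple of pairwise commuting symmetric positive definite $n\times n$ matrices and $G\in\mathcal{G}_\Theta$, and let $Y_{e^t}=\lim_{M_1\to\infty}\cdots\lim_{M_N\to\infty}\sum_{j_1=-M_1}^{t_1}\cdots\sum_{j_N=-M_N}^{t_N}e^{j\ast\Theta}\Delta_jG$. Then for every $t\in\mathbb{Z}^N$, $\sum_{j_1=-M_1}^{t_1}\cdots\sum_{j_N=-M_N}^{t_N}e^{j\ast\Theta}\Delta_jG\to Y_{e^t}$ in probability regardless of how $M=(M_1,\dots,M_N)$ tends to infinity (i.e. for every order of iterated limits and as the joint limit $\min_lM_l\to\infty$), with the same limit.
   Context: For $t\in\mathbb{Z}^N$ and an $N$-tuple $\Theta$ of $n\times n$ matrices, $t\ast\Theta=\sum_{j=1}^N t_j\Theta_j$. For a field $Z=(Z_t)_{t\in\mathbb{Z}^N}$, $\Delta_t Z=\sum_{i\in\{0,1\}^N}(-1)^{i_1+\dots+i_N}Z_{t_1-i_1,\dots,t_N-i_N}$. Equality in law of fields means equality of all finite-dimensional distributions. $G$ is a stationary increment field if $(\Delta_{t+s}G)_{t}$ and $(\Delta_tG)_{t}$ are equal in law for every $s\in\mathbb{Z}^N$. $\mathcal{G}_\Theta$ is the class of stationary increment fields $G$ such that the iterated limit $\lim_{M_1\to\infty}\cdots\lim_{M_N\to\infty}\sum_{j_1=-M_1}^{t_1}\cdots\sum_{j_N=-M_N}^{t_N}e^{j\ast\Theta}\Delta_jG$ converges in probability for every $t\in\mathbb{Z}^N$. *)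

theory Defs
  imports "HOL-Probability.Probability"
begin

primrec mpow :: "real^'n^'n \<Rightarrow> nat \<Rightarrow> real^'n^'n" where
  "mpow A 0 = mat 1"
| "mpow A (Suc k) = A ** mpow A k"

definition mexp :: "real^'n^'n \<Rightarrow> real^'n^'n" where
  "mexp A = (\<Sum>k. (1 / fact k) *\<^sub>R mpow A k)"

definition sym_posdef :: "real^'n^'n \<Rightarrow> bool" where
  "sym_posdef A \<longleftrightarrow> transpose A = A \<and> (\<forall>x. x \<noteq> 0 \<longrightarrow> 0 < x \<bullet> (A *v x))"

definition ZN :: "nat \<Rightarrow> (nat \<Rightarrow> int) set" where
  "ZN N = {t. \<forall>l\<ge>N. t l = 0}"

definition bits :: "nat \<Rightarrow> (nat \<Rightarrow> int) set" where
  "bits N = {i. (\<forall>l<N. i l \<in> {0,1}) \<and> (\<forall>l\<ge>N. i l = 0)}"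

definition tstar :: "nat \<Rightarrow> (nat \<Rightarrow> int) \<Rightarrow> (nat \<Rightarrow> real^'n^'n) \<Rightarrow> real^'n^'n" where
  "tstar N t \<Theta> = (\<Sum>l<N. of_int (t l) *\<^sub>R \<Theta> l)"

definition incr :: "nat \<Rightarrow> ((nat \<Rightarrow> int) \<Rightarrow> 'a \<Rightarrow> 'b::real_vector) \<Rightarrow> (nat \<Rightarrow> int) \<Rightarrow> 'a \<Rightarrow> 'b" where
  "incr N Z t \<omega> = (\<Sum>i\<in>bits N. ((-1::real) ^ (\<Sum>l<N. nat (i l))) *\<^sub>R Z (\<lambda>l. t l - i l) \<omega>)"

definition stationary_incr :: "'a measure \<Rightarrow> nat \<Rightarrow> ((nat \<Rightarrow> int) \<Rightarrow> 'a \<Rightarrow> 'b::{real_vector,topological_space}) \<Rightarrow> bool" where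
  "stationary_incr P N G \<longleftrightarrow>
     (\<forall>s\<in>ZN N. \<forall>T. finite T \<and> T \<subseteq> ZN N \<longrightarrow>
        distr P (PiM T (\<lambda>_. borel)) (\<lambda>\<omega>. \<lambda>t\<in>T. incr N G (\<lambda>l. t l + s l) \<omega>)
      = distr P (PiM T (\<lambda>_. borel)) (\<lambda>\<omega>. \<lambda>t\<in>T. incr N G t \<omega>))"

definition conv_prob :: "'a measure \<Rightarrow> ('i \<Rightarrow> 'a \<Rightarrow> 'b::metric_space) \<Rightarrow> ('a \<Rightarrow> 'b) \<Rightarrow> 'i filter \<Rightarrow> bool" where
  "conv_prob P X Y F \<longleftrightarrow>
     (\<forall>x. X x \<in> borel_measurable P) \<and> Y \<in> borel_measurable P \<and>
     (\<forall>\<epsilon>>0. ((\<lambda>x. measure P {\<omega>\<in>space P. \<epsilon> < dist (X x \<omega>) (Y \<omega>)}) \<longlongrightarrow> 0) F)"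

text \<open>Iterated limit in probability of a family S M (M = (M_0,...)) with respect to an order of
  the coordinates; the list is given innermost limit first.  ilim P [l_k,...,l_1] S Y means
  lim_{M_{l_1}} ... lim_{M_{l_k}} S M = Y in probability.\<close>
primrec ilim :: "'a measure \<Rightarrow> nat list \<Rightarrow> ((nat \<Rightarrow> int) \<Rightarrow> 'a \<Rightarrow> 'b::metric_space) \<Rightarrow> ('a \<Rightarrow> 'b) \<Rightarrow> bool" where
  "ilim P [] S Y \<longleftrightarrow> (\<forall>M. S M = Y)"
| "ilim P (l # ls) S Y \<longleftrightarrow>
     (\<exists>T. (\<forall>M. conv_prob P (\<lambda>m::int. S (M(l := m))) (T M) at_top) \<and> ilim P ls T Y)"

definition joint_at_top :: "nat \<Rightarrow> (nat \<Rightarrow> int) filter" where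
  "joint_at_top N = (INF K::int. principal {M. \<forall>l<N. K \<le> M l})"

definition box :: "nat \<Rightarrow> (nat \<Rightarrow> int) \<Rightarrow> (nat \<Rightarrow> int) \<Rightarrow> (nat \<Rightarrow> int) set" where
  "box N t M = {j. (\<forall>l<N. - M l \<le> j l \<and> j l \<le> t l) \<and> (\<forall>l\<ge>N. j l = 0)}"

definition psum :: "nat \<Rightarrow> (nat \<Rightarrow> real^'n^'n) \<Rightarrow> ((nat \<Rightarrow> int) \<Rightarrow> 'a \<Rightarrow> real^'n)
    \<Rightarrow> (nat \<Rightarrow> int) \<Rightarrow> (nat \<Rightarrow> int) \<Rightarrow> 'a \<Rightarrow> real^'n" where
  "psum N \<Theta> G t M \<omega> = (\<Sum>j\<in>box N t M. mexp (tstar N j \<Theta>) *v incr N G j \<omega>)"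

text \<open>The class G_Theta (with the paper's order: M_1 outermost, ..., M_N innermost).\<close>
definition GTheta :: "'a measure \<Rightarrow> nat \<Rightarrow> (nat \<Rightarrow> real^'n^'n) \<Rightarrow> ((nat \<Rightarrow> int) \<Rightarrow> 'a \<Rightarrow> real^'n) set" where
  "GTheta P N \<Theta> = {G. (\<forall>t\<in>ZN N. G t \<in> borel_measurable P) \<and> stationary_incr P N G \<and>
      (\<forall>t\<in>ZN N. \<exists>Y. ilim P (rev [0..<N]) (psum N \<Theta> G t) Y)}"

end

theory Submission
  imports Defs
begin

text \<open>By stationarity of the increments, the partial sum with upper corner \<open>s\<close> has, up to the
  matrix factor \<open>exp ((s - t) * \<Theta>)\<close>, the law of the partial sum with upper corner \<open>t\<close>.
  For \<open>s \<le> t\<close> this factor contracts geometrically in \<open>\<Sum>l. t l - s l\<close>, because the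
  \<open>\<Theta> l\<close> commute and are positive definite; hence the limit \<open>Y s\<close> tends to \<open>0\<close> in
  probability, uniformly, as \<open>s\<close> moves away below \<open>t\<close> in any one coordinate.

  By inclusion--exclusion over the \<open>2^N\<close> corners, the sum over the rectangle \<open>[-M, t]\<close> is
  almost surely \<open>\<Sum>K. (-1)^|K| * Y\<close>, evaluated at the corners where the coordinates in \<open>K\<close>
  are cut at \<open>-M l - 1\<close>. Each term with \<open>K \<noteq> {}\<close> vanishes in probability as soon as
  one \<open>M l\<close> with \<open>l \<in> K\<close> is large, which yields the iterated limits in every order and
  the joint limit, all equal to \<open>Y t\<close>.\<close>

section \<open>Bounded endomorphisms of \<open>real^'n\<close> as a Banach algebra\<close>

text \<open>The library has the exponential only in Banach algebras, and neither \<open>real^'n^'n\<close>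
  (whose \<open>*\<close> is entrywise) nor \<open>\<Rightarrow>\<^sub>L\<close> is one; this copy of the endomorphisms is.\<close>

typedef (overloaded) 'n endo = "UNIV :: ((real^'n::finite) \<Rightarrow>\<^sub>L (real^'n)) set"
  morphisms endo_rep Endo by simp

setup_lifting type_definition_endo

instantiation endo :: (finite) real_normed_vector
begin
lift_definition norm_endo :: "'a endo \<Rightarrow> real" is norm .
lift_definition minus_endo :: "'a endo \<Rightarrow> 'a endo \<Rightarrow> 'a endo" is "(-)" .
lift_definition plus_endo :: "'a endo \<Rightarrow> 'a endo \<Rightarrow> 'a endo" is "(+)" .
lift_definition uminus_endo :: "'a endo \<Rightarrow> 'a endo" is "uminus" .
lift_definition zero_endo :: "'a endo" is "0" .
lift_definition scaleR_endo :: "real \<Rightarrow> 'a endo \<Rightarrow> 'a endo" is "scaleR" .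
definition dist_endo :: "'a endo \<Rightarrow> 'a endo \<Rightarrow> real" where "dist_endo a b = norm (a - b)"
definition sgn_endo :: "'a endo \<Rightarrow> 'a endo" where "sgn_endo x = scaleR (inverse (norm x)) x"
definition uniformity_endo :: "('a endo \<times> 'a endo) filter" where
  "uniformity_endo = (INF e\<in>{0 <..}. principal {(x, y). dist x y < e})"
definition open_endo :: "'a endo set \<Rightarrow> bool"
  where "open_endo S = (\<forall>x\<in>S. \<forall>\<^sub>F (x', y) in uniformity. x' = x \<longrightarrow> y \<in> S)"
instance
  apply standard
  unfolding dist_endo_def open_endo_def sgn_endo_def uniformity_endo_def
  apply (rule refl | (transfer, force simp: norm_triangle_ineq algebra_simps))+
  done
end

instantiation endo :: (finite) real_normed_algebra_1
begin
lift_definition times_endo :: "'a endo \<Rightarrow> 'a endo \<Rightarrow> 'a endo" is "(o\<^sub>L)" .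
lift_definition one_endo :: "'a endo" is "id_blinfun" .
instance
proof
  fix a b c :: "'a endo" and r :: real
  show "a * b * c = a * (b * c)" "(a + b) * c = a * c + b * c" "a * (b + c) = a * b + a * c"
    "r *\<^sub>R a * b = r *\<^sub>R (a * b)" "a * r *\<^sub>R b = r *\<^sub>R (a * b)" "1 * a = a" "a * 1 = a"
    by (transfer, rule blinfun_eqI, simp add: blinfun.bilinear_simps)+
  show "norm (a * b) \<le> norm a * norm b" by transfer (rule norm_blinfun_compose)
  show "norm (1::'a endo) = 1" by transfer simp
  then show "(0::'a endo) \<noteq> 1" by (metis norm_zero zero_neq_one)
qed
end

instance endo :: (finite) banach
proof
  fix X :: "nat \<Rightarrow> 'a endo" assume "Cauchy X"
  then have "Cauchy (\<lambda>n. endo_rep (X n))"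
    unfolding Cauchy_def dist_norm by transfer
  then obtain L where "(\<lambda>n. endo_rep (X n)) \<longlonglongrightarrow> L" using Cauchy_convergent convergent_def by blast
  then have "X \<longlonglongrightarrow> Endo L"
    unfolding tendsto_iff dist_norm by transfer
  then show "convergent X" by (auto simp: convergent_def)
qed

lemma endo_rep_mult: "endo_rep (X * Y) x = endo_rep X (endo_rep Y x)"
  by (simp add: times_endo.rep_eq)

lemma norm_endo_rep_le: "norm (endo_rep X x) \<le> norm X * norm x"
  using norm_blinfun[of "endo_rep X" x] by (simp add: norm_endo.rep_eq)

lemma norm_endo_rep_power_le:
  assumes "0 \<le> q" "\<And>x. norm (endo_rep E x) \<le> q * norm x"
  shows "norm (endo_rep (E ^ m) x) \<le> q ^ m * norm x"
proof (induction m arbitrary: x)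
  case 0
  then show ?case by (simp add: one_endo.rep_eq)
next
  case (Suc m)
  have "norm (endo_rep (E ^ Suc m) x) \<le> q * norm (endo_rep (E ^ m) x)"
    by (simp add: endo_rep_mult assms(2))
  also have "\<dots> \<le> q * (q ^ m * norm x)" by (rule mult_left_mono[OF Suc assms(1)])
  finally show ?case by simp
qed

section \<open>The matrix exponential\<close>

definition endo_of_mat :: "real^'n^'n \<Rightarrow> 'n::finite endo" where
  "endo_of_mat A = Endo (Blinfun (\<lambda>x. A *v x))"

definition mat_of_endo :: "'n::finite endo \<Rightarrow> real^'n^'n" where
  "mat_of_endo X = matrix (endo_rep X)"

lemma endo_rep_endo_of_mat [simp]: "endo_rep (endo_of_mat A) x = A *v x"
  unfolding endo_of_mat_def by (simp add: Endo_inverse bounded_linear_Blinfun_apply)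

lemma mat_of_endo_mult_vec: "mat_of_endo X *v x = endo_rep X x"
  unfolding mat_of_endo_def by (simp add: matrix_works blinfun.bounded_linear_right bounded_linear.linear)

lemma mat_of_endo_endo_of_mat [simp]: "mat_of_endo (endo_of_mat A) = A"
  by (simp add: matrix_eq mat_of_endo_mult_vec)

lemma endo_of_mat_inject: "endo_of_mat A = endo_of_mat B \<longleftrightarrow> A = B"
  by (metis mat_of_endo_endo_of_mat)

lemma endo_eqI: "(\<And>x. endo_rep X x = endo_rep Y x) \<Longrightarrow> X = Y"
  by (metis blinfun_eqI endo_rep_inject)

lemma endo_of_mat_mult: "endo_of_mat (A ** B) = endo_of_mat A * endo_of_mat B"
  by (rule endo_eqI) (simp add: endo_rep_mult matrix_vector_mul_assoc)

lemma endo_of_mat_one: "endo_of_mat (mat 1) = 1"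
  by (rule endo_eqI) (simp add: one_endo.rep_eq)

lemma endo_of_mat_add: "endo_of_mat (A + B) = endo_of_mat A + endo_of_mat B"
  by (rule endo_eqI) (simp add: plus_endo.rep_eq matrix_vector_mult_add_rdistrib blinfun.bilinear_simps)

lemma endo_of_mat_scaleR: "endo_of_mat (r *\<^sub>R A) = r *\<^sub>R endo_of_mat A"
  by (rule endo_eqI) (simp add: scaleR_endo.rep_eq scaleR_matrix_vector_assoc blinfun.bilinear_simps)

lemma endo_of_mat_zero: "endo_of_mat 0 = 0"
  using endo_of_mat_scaleR[of 0 0] by simp

lemma endo_of_mat_sum: "endo_of_mat (\<Sum>i\<in>S. f i) = (\<Sum>i\<in>S. endo_of_mat (f i))"
  by (induction S rule: infinite_finite_induct)
    (auto simp: endo_of_mat_add endo_of_mat_zero)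

lemma endo_of_mat_mpow: "endo_of_mat (mpow A k) = endo_of_mat A ^ k"
  by (induction k) (auto simp: endo_of_mat_one endo_of_mat_mult)

lemma norm_mat_of_endo_le: "norm (mat_of_endo X) \<le> real CARD('n) * real CARD('n) * norm (X::'n::finite endo)"
proof -
  have entry: "\<bar>mat_of_endo X $ i $ j\<bar> \<le> norm X" for i j
  proof -
    have "\<bar>mat_of_endo X $ i $ j\<bar> \<le> norm (endo_rep X (axis j 1))"
      unfolding mat_of_endo_def matrix_def by (simp add: component_le_norm_cart)
    also have "\<dots> \<le> norm X" using norm_endo_rep_le[of X "axis j (1::real)"] by simp
    finally show ?thesis .
  qed
  have row: "norm (mat_of_endo X $ i) \<le> real CARD('n) * norm X" for i
    using order_trans[OF norm_le_l1_cart sum_mono[OF entry]] by simp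
  have "norm (mat_of_endo X) \<le> (\<Sum>i\<in>UNIV. norm (mat_of_endo X $ i))"
    by (simp add: norm_vec_def L2_set_le_sum)
  also have "\<dots> \<le> real CARD('n) * real CARD('n) * norm X"
    using sum_mono[OF row] by (simp add: mult.assoc)
  finally show ?thesis .
qed

lemma bounded_linear_mat_of_endo: "bounded_linear (mat_of_endo :: 'n::finite endo \<Rightarrow> _)"
proof (rule bounded_linear_intro[where K="real CARD('n) * real CARD('n)"])
  fix X Y :: "'n endo" and r :: real
  show "mat_of_endo (X + Y) = mat_of_endo X + mat_of_endo Y"
    by (simp add: matrix_eq mat_of_endo_mult_vec matrix_vector_mult_add_rdistrib plus_endo.rep_eq
        blinfun.bilinear_simps)
  show "mat_of_endo (r *\<^sub>R X) = r *\<^sub>R mat_of_endo X"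
    by (simp add: matrix_eq mat_of_endo_mult_vec scaleR_endo.rep_eq
        scaleR_matrix_vector_assoc[symmetric] blinfun.bilinear_simps)
  show "norm (mat_of_endo X) \<le> norm X * (real CARD('n) * real CARD('n))"
    using norm_mat_of_endo_le[of X] by (simp add: mult.commute)
qed

lemma mat_of_endo_mult: "mat_of_endo (X * Y) = mat_of_endo X ** mat_of_endo Y"
  by (simp add: matrix_eq mat_of_endo_mult_vec endo_rep_mult matrix_vector_mul_assoc[symmetric])

lemma mexp_eq_exp: "mexp A = mat_of_endo (exp (endo_of_mat A))"
proof -
  have "mat_of_endo (exp (endo_of_mat A)) = (\<Sum>n. mat_of_endo (endo_of_mat A ^ n /\<^sub>R fact n))"
    unfolding exp_def using bounded_linear.suminf[OF bounded_linear_mat_of_endo summable_exp_generic[of "endo_of_mat A"]]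
    by simp
  also have "\<dots> = mexp A"
    by (simp add: mexp_def linear_scale[OF bounded_linear.linear[OF bounded_linear_mat_of_endo]] endo_of_mat_mpow[symmetric]
        divide_inverse)
  finally show ?thesis ..
qed

lemma mexp_mult_vec: "mexp A *v x = endo_rep (exp (endo_of_mat A)) x"
  by (simp add: mexp_eq_exp mat_of_endo_mult_vec)

lemma mexp_add_commuting:
  assumes "A ** B = B ** A"
  shows "mexp (A + B) = mexp A ** mexp B"
proof -
  have "endo_of_mat A * endo_of_mat B = endo_of_mat B * endo_of_mat A"
    using assms by (simp add: endo_of_mat_mult[symmetric])
  then have "exp (endo_of_mat (A + B)) = exp (endo_of_mat A) * exp (endo_of_mat B)"
    by (simp add: endo_of_mat_add exp_add_commuting)
  then show ?thesis by (simp add: mexp_eq_exp mat_of_endo_mult)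
qed

lemma exp_scaleR_of_nat: "exp (real n *\<^sub>R x) = exp x ^ n"
  for x :: "'a::{real_normed_algebra_1,banach}"
proof (induction n)
  case (Suc n)
  have "exp (x + real n *\<^sub>R x) = exp x * exp (real n *\<^sub>R x)"
    by (rule exp_add_commuting) simp
  then show ?case using Suc by (simp add: scaleR_add_left add.commute)
qed simp

lemma sum_scaleR_commute:
  fixes X :: "'i \<Rightarrow> 'a::real_algebra"
  assumes "\<forall>k\<in>S. \<forall>l\<in>T. X k * X l = X l * X k"
  shows "(\<Sum>k\<in>S. a k *\<^sub>R X k) * (\<Sum>l\<in>T. b l *\<^sub>R X l) = (\<Sum>l\<in>T. b l *\<^sub>R X l) * (\<Sum>k\<in>S. a k *\<^sub>R X k)"
proof -
  have "(\<Sum>k\<in>S. a k *\<^sub>R X k) * (\<Sum>l\<in>T. b l *\<^sub>R X l) = (\<Sum>k\<in>S. \<Sum>l\<in>T. (a k *\<^sub>R X k) * (b l *\<^sub>R X l))"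
    by (rule sum_product)
  also have "\<dots> = (\<Sum>k\<in>S. \<Sum>l\<in>T. (b l *\<^sub>R X l) * (a k *\<^sub>R X k))"
  proof (intro sum.cong refl)
    fix k l assume "k \<in> S" "l \<in> T"
    then have "X k * X l = X l * X k" using assms by blast
    then show "(a k *\<^sub>R X k) * (b l *\<^sub>R X l) = (b l *\<^sub>R X l) * (a k *\<^sub>R X k)"
      by (simp only: mult_scaleR_left mult_scaleR_right scaleR_scaleR mult.commute[of "a k"])
  qed
  also have "\<dots> = (\<Sum>l\<in>T. b l *\<^sub>R X l) * (\<Sum>k\<in>S. a k *\<^sub>R X k)"
    by (subst sum.swap) (rule sum_product[symmetric])
  finally show ?thesis .
qed

lemma matrix_mult_sum_scaleR_commute:
  fixes \<Theta> :: "'i \<Rightarrow> real^'n::finite^'n"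
  assumes "\<forall>k\<in>S. \<forall>l\<in>T. \<Theta> k ** \<Theta> l = \<Theta> l ** \<Theta> k"
  shows "(\<Sum>k\<in>S. a k *\<^sub>R \<Theta> k) ** (\<Sum>l\<in>T. b l *\<^sub>R \<Theta> l) = (\<Sum>l\<in>T. b l *\<^sub>R \<Theta> l) ** (\<Sum>k\<in>S. a k *\<^sub>R \<Theta> k)"
proof -
  have comm: "\<forall>k\<in>S. \<forall>l\<in>T. endo_of_mat (\<Theta> k) * endo_of_mat (\<Theta> l) = endo_of_mat (\<Theta> l) * endo_of_mat (\<Theta> k)"
  proof (intro ballI)
    fix k l assume "k \<in> S" "l \<in> T"
    then have "\<Theta> k ** \<Theta> l = \<Theta> l ** \<Theta> k" using assms by blast
    then show "endo_of_mat (\<Theta> k) * endo_of_mat (\<Theta> l) = endo_of_mat (\<Theta> l) * endo_of_mat (\<Theta> k)"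
      by (simp only: endo_of_mat_mult[symmetric])
  qed
  have "endo_of_mat ((\<Sum>k\<in>S. a k *\<^sub>R \<Theta> k) ** (\<Sum>l\<in>T. b l *\<^sub>R \<Theta> l))
      = endo_of_mat ((\<Sum>l\<in>T. b l *\<^sub>R \<Theta> l) ** (\<Sum>k\<in>S. a k *\<^sub>R \<Theta> k))"
    unfolding endo_of_mat_mult endo_of_mat_sum endo_of_mat_scaleR by (rule sum_scaleR_commute[OF comm])
  then show ?thesis by (simp only: endo_of_mat_inject)
qed

lemma mexp_tstar_add:
  assumes "\<forall>k<N. \<forall>l<N. \<Theta> k ** \<Theta> l = \<Theta> l ** \<Theta> k"
  shows "mexp (tstar N (\<lambda>l. k l + d l) \<Theta>) = mexp (tstar N d \<Theta>) ** mexp (tstar N k \<Theta>)"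
proof -
  have "tstar N (\<lambda>l. k l + d l) \<Theta> = tstar N d \<Theta> + tstar N k \<Theta>"
    by (simp add: tstar_def scaleR_add_left sum.distrib)
  moreover have "tstar N d \<Theta> ** tstar N k \<Theta> = tstar N k \<Theta> ** tstar N d \<Theta>"
    unfolding tstar_def by (rule matrix_mult_sum_scaleR_commute) (use assms lessThan_iff in blast)
  ultimately show ?thesis by (simp add: mexp_add_commuting)
qed

lemma matrix_vector_mult_sum: "(A::real^'n^'m) *v (\<Sum>i\<in>S. f i) = (\<Sum>i\<in>S. A *v f i)"
  by (induction S rule: infinite_finite_induct) (auto simp: matrix_vector_right_distrib)

lemma borel_measurable_matrix_vector_mult [measurable]: "(\<lambda>x. (A::real^'n^'m) *v x) \<in> borel_measurable borel"
  by (intro borel_measurable_continuous_onI linear_continuous_on matrix_vector_mul_bounded_linear)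

section \<open>Exponential decay\<close>

lemma norm_exp_sub_one_sub_le:
  fixes z :: "'a::{real_normed_algebra_1,banach}"
  shows "norm (exp z - 1 - z) \<le> (norm z)^2 * exp (norm z)"
proof -
  define f where "f n = z^n /\<^sub>R fact n" for n
  have "exp z = (\<Sum>n. f (n + 2)) + (\<Sum>i<2. f i)"
    unfolding exp_def f_def[symmetric] by (rule suminf_split_initial_segment) (simp add: f_def summable_exp_generic)
  then have eq: "exp z - 1 - z = (\<Sum>n. f (n + 2))"
    by (simp add: f_def numeral_2_eq_2)
  have sn: "summable (\<lambda>n. norm (f (n + 2)))"
    using summable_norm_exp[of z] by (subst summable_iff_shift) (simp add: f_def)
  have le: "norm (f (n + 2)) \<le> (norm z)^2 * ((norm z)^n /\<^sub>R fact n)" for n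
  proof -
    have "norm (f (n + 2)) = norm (z^(n + 2)) / fact (n + 2)"
      by (simp add: f_def divide_inverse mult.commute)
    also have "\<dots> \<le> (norm z)^(n + 2) / fact (n + 2)"
      by (rule divide_right_mono[OF norm_power_ineq]) simp
    also have "\<dots> \<le> (norm z)^(n + 2) / fact n"
    proof (rule divide_left_mono)
      show "fact n \<le> (fact (n + 2) :: real)" by (rule fact_mono) simp
    qed auto
    also have "\<dots> = (norm z)^2 * ((norm z)^n /\<^sub>R fact n)"
      by (simp add: power_add divide_inverse power2_eq_square)
    finally show ?thesis .
  qed
  have "norm (exp z - 1 - z) \<le> (\<Sum>n. norm (f (n + 2)))"
    unfolding eq by (rule summable_norm[OF sn])
  also have "\<dots> \<le> (\<Sum>n. (norm z)^2 * ((norm z)^n /\<^sub>R fact n))"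
    by (rule suminf_le[OF le sn]) (intro summable_mult summable_exp_generic)
  also have "\<dots> = (norm z)^2 * exp (norm z)"
    by (simp only: suminf_mult[OF summable_exp_generic] exp_def)
  finally show ?thesis .
qed

lemma sym_posdef_quadratic_lower_bound:
  fixes \<Theta> :: "real^'n::finite^'n"
  assumes "sym_posdef \<Theta>"
  shows "\<exists>lam>0. \<forall>x. lam * (norm x)^2 \<le> x \<bullet> (\<Theta> *v x)"
proof -
  let ?S = "sphere (0::real^'n) 1"
  have "?S \<noteq> {}" using norm_axis_1[of undefined] by (metis dist_0_norm mem_sphere empty_iff)
  moreover have "continuous_on ?S (\<lambda>x. x \<bullet> (\<Theta> *v x))"
    by (intro continuous_intros continuous_on_compose2[OF bounded_linear.continuous_on[OF
          matrix_vector_mul_bounded_linear]]) auto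
  ultimately obtain x0 where x0: "x0 \<in> ?S" "\<And>y. y \<in> ?S \<Longrightarrow> x0 \<bullet> (\<Theta> *v x0) \<le> y \<bullet> (\<Theta> *v y)"
    using continuous_attains_inf[OF compact_sphere] by blast
  have "x0 \<noteq> 0" using x0(1) by auto
  then have pos: "0 < x0 \<bullet> (\<Theta> *v x0)"
    using assms unfolding sym_posdef_def by blast
  have "(x0 \<bullet> (\<Theta> *v x0)) * (norm x)^2 \<le> x \<bullet> (\<Theta> *v x)" for x
  proof (cases "x = 0")
    case False
    have "x0 \<bullet> (\<Theta> *v x0) \<le> (x /\<^sub>R norm x) \<bullet> (\<Theta> *v (x /\<^sub>R norm x))"
      using False by (intro x0(2)) simp
    also have "\<dots> = (x \<bullet> (\<Theta> *v x)) / (norm x)^2"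
      by (simp add: matrix_vector_mult_scaleR power2_eq_square divide_inverse)
    finally show ?thesis using False by (simp add: pos_le_divide_eq)
  qed simp
  then show ?thesis using pos by blast
qed

lemma norm_sub_scaleR_mult_vec_le:
  fixes A :: "real^'n::finite^'n"
  assumes lower: "lam * (norm x)^2 \<le> x \<bullet> (A *v x)" and upper: "norm (A *v x) \<le> z * norm x"
    and h: "0 \<le> h" "h * lam \<le> 1"
  shows "norm (x - h *\<^sub>R (A *v x)) \<le> (1 - h * lam + h^2 * z^2 / 2) * norm x"
proof (rule power2_le_imp_le)
  have "(norm (x - h *\<^sub>R (A *v x)))^2 = (norm x)^2 - 2 * h * (x \<bullet> (A *v x)) + h^2 * (norm (A *v x))^2"
    by (simp only: power2_norm_eq_inner)
      (simp add: inner_diff_left inner_diff_right inner_commute power2_eq_square algebra_simps)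
  also have "\<dots> \<le> (norm x)^2 - 2 * h * (lam * (norm x)^2) + h^2 * (z * norm x)^2"
    using lower upper h by (intro add_mono diff_mono order_refl mult_left_mono power_mono) auto
  also have "\<dots> \<le> ((1 - h * lam + h^2 * z^2 / 2) * norm x)^2"
  proof -
    have "0 \<le> (h * lam - h^2 * z^2 / 2)^2 * (norm x)^2" by simp
    then show ?thesis by (simp add: power2_eq_square algebra_simps)
  qed
  finally show "(norm (x - h *\<^sub>R (A *v x)))^2 \<le> ((1 - h * lam + h^2 * z^2 / 2) * norm x)^2" .
  have "0 \<le> 1 - h * lam + h^2 * z^2 / 2" using h(2) by (simp add: add_nonneg_nonneg)
  then show "0 \<le> (1 - h * lam + h^2 * z^2 / 2) * norm x" by simp
qed

lemma norm_mexp_small_step_le: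
  fixes A :: "real^'n::finite^'n"
  defines "z \<equiv> norm (endo_of_mat A)"
  assumes lower: "\<And>x. lam * (norm x)^2 \<le> x \<bullet> (A *v x)"
    and h: "0 < h" "h \<le> 1" "h * lam \<le> 1" and small: "h * (z^2 * (1/2 + exp z)) \<le> lam / 2"
  shows "norm (mexp ((- h) *\<^sub>R A) *v x) \<le> (1 - h * lam / 2) * norm x"
proof -
  define w where "w = endo_of_mat ((- h) *\<^sub>R A)"
  define R where "R = exp w - 1 - w"
  have nw: "norm w = h * z" using h endo_of_mat_scaleR[of "- h" A] by (simp add: w_def z_def)
  have "norm R \<le> (h * z)^2 * exp (h * z)"
    unfolding R_def nw[symmetric] by (rule norm_exp_sub_one_sub_le)
  also have "\<dots> \<le> (h * z)^2 * exp z"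
    using h by (intro mult_left_mono) (auto simp: z_def mult_left_le_one_le)
  finally have nR: "norm R \<le> h^2 * z^2 * exp z" by (simp add: power_mult_distrib)
  have "mexp ((- h) *\<^sub>R A) *v x = endo_rep (1 + w + R) x"
    by (simp add: mexp_mult_vec R_def w_def)
  also have "\<dots> = (x - h *\<^sub>R (A *v x)) + endo_rep R x"
    using endo_of_mat_scaleR[of "- h" A]
    by (simp add: w_def plus_endo.rep_eq minus_endo.rep_eq one_endo.rep_eq scaleR_endo.rep_eq
        blinfun.bilinear_simps)
  finally have "mexp ((- h) *\<^sub>R A) *v x = (x - h *\<^sub>R (A *v x)) + endo_rep R x" .
  then have "norm (mexp ((- h) *\<^sub>R A) *v x) \<le> norm (x - h *\<^sub>R (A *v x)) + norm (endo_rep R x)"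
    by (simp add: norm_triangle_ineq)
  also have "\<dots> \<le> (1 - h * lam + h^2 * z^2 / 2) * norm x + (h^2 * z^2 * exp z) * norm x"
  proof (rule add_mono)
    have "norm (A *v x) \<le> z * norm x"
      using norm_endo_rep_le[of "endo_of_mat A" x] by (simp add: z_def)
    then show "norm (x - h *\<^sub>R (A *v x)) \<le> (1 - h * lam + h^2 * z^2 / 2) * norm x"
      using h by (intro norm_sub_scaleR_mult_vec_le[OF lower]) auto
    show "norm (endo_rep R x) \<le> (h^2 * z^2 * exp z) * norm x"
      using norm_endo_rep_le[of R x] mult_right_mono[OF nR norm_ge_zero[of x]] by linarith
  qed
  also have "\<dots> = (1 - h * lam + h * (h * (z^2 * (1/2 + exp z)))) * norm x"
    by (simp add: power2_eq_square algebra_simps)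
  also have "\<dots> \<le> (1 - h * lam / 2) * norm x"
  proof (rule mult_right_mono)
    have "h * (h * (z^2 * (1/2 + exp z))) \<le> h * (lam / 2)"
      using h small by (intro mult_left_mono) auto
    then show "1 - h * lam + h * (h * (z^2 * (1/2 + exp z))) \<le> 1 - h * lam / 2" by simp
  qed simp
  finally show ?thesis .
qed

text \<open>\<open>exp (-c \<Theta>) = exp (-\<Theta> / k) ^ (c k)\<close>, and for large \<open>k\<close> one step contracts by
  \<open>1 - lam / (2 k)\<close>.\<close>

lemma mexp_neg_contraction:
  fixes \<Theta> :: "real^'n::finite^'n"
  assumes "sym_posdef \<Theta>"
  shows "\<exists>q\<ge>0. q < 1 \<and> (\<forall>(c::nat) x. norm (mexp ((- real c) *\<^sub>R \<Theta>) *v x) \<le> q^c * norm x)"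
proof -
  obtain lam where lam: "lam > 0" "\<And>x. lam * (norm x)^2 \<le> x \<bullet> (\<Theta> *v x)"
    using sym_posdef_quadratic_lower_bound[OF assms] by blast
  define z where "z = norm (endo_of_mat \<Theta>)"
  define C where "C = z^2 * (1/2 + exp z)"
  have "0 \<le> C" by (simp add: C_def)
  obtain k :: nat where k: "real k \<ge> 1 + lam + 2 * C / lam" using real_arch_simple by blast
  have "0 \<le> 2 * C / lam" using lam \<open>0 \<le> C\<close> by simp
  with k lam have k_pos: "real k > 0" and lam_le: "lam \<le> real k" and "2 * C / lam \<le> real k"
    by linarith+
  then have "2 * C \<le> real k * lam" using lam by (simp add: divide_le_eq)
  define q where "q = 1 - 1 / real k * lam / 2"
  have step: "norm (mexp ((- (1 / real k)) *\<^sub>R \<Theta>) *v x) \<le> q * norm x" for x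
    unfolding q_def
  proof (rule norm_mexp_small_step_le[OF lam(2)])
    show "0 < 1 / real k" "1 / real k \<le> 1" "1 / real k * lam \<le> 1"
      using k_pos lam_le k by (auto simp: field_simps)
    show "1 / real k * (norm (endo_of_mat \<Theta>)^2 * (1/2 + exp (norm (endo_of_mat \<Theta>)))) \<le> lam / 2"
      using \<open>2 * C \<le> real k * lam\<close> k_pos by (simp add: C_def z_def field_simps)
  qed
  have q: "0 \<le> q" "q < 1" using lam lam_le k_pos by (auto simp: q_def field_simps)
  have "norm (mexp ((- real c) *\<^sub>R \<Theta>) *v x) \<le> q^c * norm x" for c x
  proof -
    have "(- real c) *\<^sub>R \<Theta> = real (c * k) *\<^sub>R ((- (1 / real k)) *\<^sub>R \<Theta>)"
      using k_pos by simp
    then have "mexp ((- real c) *\<^sub>R \<Theta>) *v x = endo_rep (exp (endo_of_mat ((- (1 / real k)) *\<^sub>R \<Theta>)) ^ (c * k)) x"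
      by (metis endo_of_mat_scaleR exp_scaleR_of_nat mexp_mult_vec)
    also have "norm \<dots> \<le> q ^ (c * k) * norm x"
      using q step by (intro norm_endo_rep_power_le) (auto simp: mexp_mult_vec)
    also have "\<dots> \<le> q ^ c * norm x"
      using q k_pos by (intro mult_right_mono power_decreasing) (auto simp: Suc_le_eq)
    finally show ?thesis .
  qed
  then show ?thesis using q by blast
qed

lemma tstar_Suc: "tstar (Suc n) d \<Theta> = tstar n d \<Theta> + of_int (d n) *\<^sub>R \<Theta> n"
  by (simp add: tstar_def)

lemma mexp_neg_contraction_uniform:
  fixes \<Theta> :: "nat \<Rightarrow> real^'n::finite^'n"
  assumes "\<forall>l<N. sym_posdef (\<Theta> l)"
  shows "\<exists>q\<ge>0. q < 1 \<and> (\<forall>l<N. \<forall>(c::nat) x. norm (mexp ((- real c) *\<^sub>R \<Theta> l) *v x) \<le> q^c * norm x)"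
proof -
  have "\<forall>l\<in>{..<N}. \<exists>q. 0 \<le> q \<and> q < 1 \<and>
      (\<forall>(c::nat) x. norm (mexp ((- real c) *\<^sub>R \<Theta> l) *v x) \<le> q^c * norm x)"
    using mexp_neg_contraction assms by blast
  then obtain Q where Q: "\<And>l. l < N \<Longrightarrow> 0 \<le> Q l \<and> Q l < 1 \<and>
      (\<forall>(c::nat) x. norm (mexp ((- real c) *\<^sub>R \<Theta> l) *v x) \<le> (Q l)^c * norm x)"
    by (metis lessThan_iff bchoice)
  define q where "q = Max (insert 0 (Q ` {..<N}))"
  have q: "0 \<le> q" "q < 1" unfolding q_def using Q by (auto simp: Max_less_iff)
  have "norm (mexp ((- real c) *\<^sub>R \<Theta> l) *v x) \<le> q^c * norm x" if "l < N" for l c x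
  proof -
    have "Q l \<le> q" unfolding q_def using that by (intro Max_ge) auto
    then have "(Q l)^c * norm x \<le> q^c * norm x"
      using Q[OF that] by (intro mult_right_mono power_mono) auto
    then show ?thesis using Q[OF that] by (meson order_trans)
  qed
  then show ?thesis using q by blast
qed

lemma mexp_tstar_contraction:
  fixes \<Theta> :: "nat \<Rightarrow> real^'n::finite^'n"
  assumes pd: "\<forall>l<N. sym_posdef (\<Theta> l)"
    and cm: "\<forall>k<N. \<forall>l<N. \<Theta> k ** \<Theta> l = \<Theta> l ** \<Theta> k"
  shows "\<exists>q\<ge>0. q < 1 \<and> (\<forall>d. (\<forall>l<N. d l \<le> 0) \<longrightarrow>
           (\<forall>x. norm (mexp (tstar N d \<Theta>) *v x) \<le> q ^ (\<Sum>l<N. nat (- d l)) * norm x))"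
proof -
  obtain q where q: "0 \<le> q" "q < 1" and Q: "\<And>l c x. l < N \<Longrightarrow>
      norm (mexp ((- real c) *\<^sub>R \<Theta> l) *v x) \<le> q^c * norm x"
    using mexp_neg_contraction_uniform[OF pd] by blast
  have "norm (mexp (tstar n d \<Theta>) *v x) \<le> q ^ (\<Sum>l<n. nat (- d l)) * norm x"
    if "n \<le> N" "\<forall>l<N. d l \<le> 0" for n d x
    using that(1)
  proof (induction n arbitrary: x)
    case 0
    then show ?case by (simp add: tstar_def mexp_mult_vec endo_of_mat_zero one_endo.rep_eq)
  next
    case (Suc n)
    then have n: "n < N" by simp
    define B where "B = of_int (d n) *\<^sub>R \<Theta> n"
    have "tstar n d \<Theta> ** (\<Sum>l\<in>{n}. of_int (d l) *\<^sub>R \<Theta> l) = (\<Sum>l\<in>{n}. of_int (d l) *\<^sub>R \<Theta> l) ** tstar n d \<Theta>"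
      unfolding tstar_def
    proof (rule matrix_mult_sum_scaleR_commute, intro ballI)
      fix k l assume "k \<in> {..<n}" "l \<in> {n}"
      then have "k < N" "l < N" using n by auto
      then show "\<Theta> k ** \<Theta> l = \<Theta> l ** \<Theta> k" using cm by blast
    qed
    then have "mexp (tstar (Suc n) d \<Theta>) *v x = mexp (tstar n d \<Theta>) *v (mexp B *v x)"
      by (simp add: tstar_Suc B_def mexp_add_commuting matrix_vector_mul_assoc)
    then have "norm (mexp (tstar (Suc n) d \<Theta>) *v x) \<le> q ^ (\<Sum>l<n. nat (- d l)) * norm (mexp B *v x)"
      using Suc by simp
    also have "\<dots> \<le> q ^ (\<Sum>l<n. nat (- d l)) * (q ^ nat (- d n) * norm x)"
    proof (rule mult_left_mono)
      have "B = (- real (nat (- d n))) *\<^sub>R \<Theta> n" using that(2) n by (simp add: B_def)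
      then show "norm (mexp B *v x) \<le> q ^ nat (- d n) * norm x" using Q[OF n] by simp
    qed (simp add: q)
    finally show ?case by (simp add: power_add mult.assoc)
  qed
  then show ?thesis using q by blast
qed

lemma norm_mult_vec_le_dist_add:
  fixes E :: "real^'n^'m"
  assumes "\<And>x. norm (E *v x) \<le> r * norm x" "r \<le> 1"
  shows "norm (E *v p) \<le> dist p y + r * norm y"
proof -
  have "norm (E *v p) \<le> norm (E *v (p - y)) + norm (E *v y)"
    using norm_triangle_ineq[of "E *v (p - y)" "E *v y"] by (simp add: matrix_vector_mult_diff_distrib)
  also have "\<dots> \<le> r * norm (p - y) + r * norm y"
    by (intro add_mono assms(1))
  also have "\<dots> \<le> dist p y + r * norm y"
    using mult_right_mono[OF assms(2) norm_ge_zero[of "p - y"]] by (simp add: dist_norm)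
  finally show ?thesis .
qed

section \<open>Iterated limits in probability\<close>

text \<open>The filter counterpart of \<open>ilim\<close>, with the same convention: the list is innermost limit first.\<close>

primrec iter_eventually :: "nat list \<Rightarrow> ((nat \<Rightarrow> int) \<Rightarrow> bool) \<Rightarrow> bool" where
  "iter_eventually [] p \<longleftrightarrow> (\<forall>M. p M)"
| "iter_eventually (l # ls) p \<longleftrightarrow> iter_eventually ls (\<lambda>M. eventually (\<lambda>m. p (M(l := m))) at_top)"

lemma iter_eventually_mono:
  "iter_eventually ls p \<Longrightarrow> (\<And>M. p M \<Longrightarrow> q M) \<Longrightarrow> iter_eventually ls q"
proof (induction ls arbitrary: p q)
  case (Cons l ls)
  show ?case unfolding iter_eventually.simps
    by (rule Cons.IH[OF Cons.prems(1)[unfolded iter_eventually.simps]])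
      (auto elim: eventually_mono intro: Cons.prems(2))
qed simp

lemma iter_eventually_True: "iter_eventually ls (\<lambda>M. True)"
  by (induction ls) simp_all

lemma iter_eventually_conj:
  "iter_eventually ls p \<Longrightarrow> iter_eventually ls q \<Longrightarrow> iter_eventually ls (\<lambda>M. p M \<and> q M)"
proof (induction ls arbitrary: p q)
  case (Cons l ls)
  have "iter_eventually ls (\<lambda>M. eventually (\<lambda>m. p (M(l := m))) at_top \<and> eventually (\<lambda>m. q (M(l := m))) at_top)"
    using Cons.IH Cons.prems by simp
  then show ?case unfolding iter_eventually.simps
    by (rule iter_eventually_mono) (simp add: eventually_conj)
qed simp

lemma iter_eventually_ball:
  "finite F \<Longrightarrow> (\<And>K. K \<in> F \<Longrightarrow> iter_eventually ls (p K)) \<Longrightarrow> iter_eventually ls (\<lambda>M. \<forall>K\<in>F. p K M)"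
proof (induction F rule: finite_induct)
  case empty
  then show ?case by (simp add: iter_eventually_True)
next
  case (insert x F)
  then have "iter_eventually ls (\<lambda>M. p x M \<and> (\<forall>K\<in>F. p K M))"
    by (intro iter_eventually_conj) auto
  then show ?case by simp
qed

lemma iter_eventually_happens: "iter_eventually ls p \<Longrightarrow> \<exists>M. p M"
proof (induction ls arbitrary: p)
  case (Cons l ls)
  then obtain M where "eventually (\<lambda>m. p (M(l := m))) at_top" by fastforce
  then obtain m where "p (M(l := m))" using eventually_happens'[of "at_top::int filter"] by auto
  then show ?case by blast
qed auto

lemma iter_eventually_ge: "iter_eventually ls (\<lambda>M. \<forall>l\<in>set ls. B l \<le> M l)"
proof (induction ls)
  case (Cons l ls)
  show ?case unfolding iter_eventually.simps
  proof (rule iter_eventually_mono[OF Cons.IH])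
    fix M assume "\<forall>l\<in>set ls. B l \<le> M l"
    then show "eventually (\<lambda>m. \<forall>l'\<in>set (l # ls). B l' \<le> (M(l := m)) l') at_top"
      by (auto intro: eventually_mono[OF eventually_ge_at_top[of "B l"]])
  qed
qed simp

lemma iter_eventually_shift:
  "iter_eventually ls p \<Longrightarrow> iter_eventually ls (\<lambda>M. p (\<lambda>i. M i + d i))"
proof (induction ls arbitrary: p)
  case (Cons l ls)
  have "iter_eventually ls (\<lambda>M. eventually (\<lambda>m. p ((\<lambda>i. M i + d i)(l := m))) at_top)"
    using Cons.IH[OF Cons.prems[unfolded iter_eventually.simps]] by (simp add: fun_upd_def)
  then show ?case unfolding iter_eventually.simps
  proof (rule iter_eventually_mono)
    fix M assume "eventually (\<lambda>m. p ((\<lambda>i. M i + d i)(l := m))) at_top"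
    then obtain m0 where m0: "\<And>m. m0 \<le> m \<Longrightarrow> p ((\<lambda>i. M i + d i)(l := m))"
      by (auto simp: eventually_at_top_linorder)
    have "(\<lambda>i. M i + d i)(l := m + d l) = (\<lambda>i. (M(l := m)) i + d i)" for m
      by auto
    then show "eventually (\<lambda>m. p (\<lambda>i. (M(l := m)) i + d i)) at_top"
      using m0 unfolding eventually_at_top_linorder by (metis add_le_cancel_right diff_add_cancel)
  qed
qed simp

lemma ilim_measurable:
  "ilim P ls S Y \<Longrightarrow> (\<And>M. S M \<in> borel_measurable P) \<Longrightarrow> Y \<in> borel_measurable P"
proof (induction ls arbitrary: S)
  case (Cons l ls)
  then obtain T where "\<And>M. conv_prob P (\<lambda>m. S (M(l := m))) (T M) at_top" "ilim P ls T Y" by auto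
  then show ?case using Cons.IH unfolding conv_prob_def by blast
qed auto

lemma tendsto_zero_nonnegI:
  fixes f :: "'i \<Rightarrow> real"
  assumes "\<And>\<delta>. \<delta> > 0 \<Longrightarrow> eventually (\<lambda>x. f x \<le> \<delta>) F" "\<And>x. 0 \<le> f x"
  shows "(f \<longlongrightarrow> 0) F"
proof (rule order_tendstoI)
  fix a :: real assume "0 < a"
  then have "eventually (\<lambda>x. f x \<le> a/2) F" by (intro assms(1)) simp
  then show "eventually (\<lambda>x. f x < a) F" by (rule eventually_mono) (use \<open>0 < a\<close> in simp)
qed (use assms(2) in \<open>auto intro: always_eventually less_le_trans\<close>)

lemma eventually_joint_at_top: "eventually (\<lambda>M. \<forall>l<N. K \<le> M l) (joint_at_top N)"
  unfolding joint_at_top_def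
proof (subst eventually_INF_base)
  show "\<exists>c\<in>UNIV. principal {M. \<forall>l<N. c \<le> M l} \<le> inf (principal {M. \<forall>l<N. a \<le> M l}) (principal {M. \<forall>l<N. b \<le> M l})"
    for a b :: int
    by (intro bexI[of _ "max a b"]) auto
qed (auto simp: eventually_principal)

context prob_space
begin

lemma measure_subset_Un_le:
  assumes "A \<subseteq> B \<union> C" "A \<in> sets M" "B \<in> sets M" "C \<in> sets M"
  shows "measure M A \<le> measure M B + measure M C"
proof -
  have "measure M A \<le> measure M (B \<union> C)"
    using assms(1) by (rule finite_measure_mono) (use assms(3,4) in simp)
  also have "\<dots> \<le> measure M B + measure M C"
    using assms(3,4) by (rule measure_Un_le)
  finally show ?thesis .
qed

lemma measure_dist_gt_add_le:
  fixes f g h :: "'a \<Rightarrow> 'b::{metric_space,second_countable_topology}"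
  assumes [measurable]: "f \<in> borel_measurable M" "g \<in> borel_measurable M" "h \<in> borel_measurable M"
  shows "measure M {\<omega>\<in>space M. a + b < dist (f \<omega>) (h \<omega>)}
     \<le> measure M {\<omega>\<in>space M. a < dist (f \<omega>) (g \<omega>)} + measure M {\<omega>\<in>space M. b < dist (g \<omega>) (h \<omega>)}"
proof -
  have "{\<omega>\<in>space M. a + b < dist (f \<omega>) (h \<omega>)}
      \<subseteq> {\<omega>\<in>space M. a < dist (f \<omega>) (g \<omega>)} \<union> {\<omega>\<in>space M. b < dist (g \<omega>) (h \<omega>)}"
  proof (rule subsetI)
    fix \<omega> assume "\<omega> \<in> {\<omega>\<in>space M. a + b < dist (f \<omega>) (h \<omega>)}"
    moreover have "dist (f \<omega>) (h \<omega>) \<le> dist (f \<omega>) (g \<omega>) + dist (g \<omega>) (h \<omega>)" by (rule dist_triangle)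
    ultimately show "\<omega> \<in> {\<omega>\<in>space M. a < dist (f \<omega>) (g \<omega>)} \<union> {\<omega>\<in>space M. b < dist (g \<omega>) (h \<omega>)}"
      by auto
  qed
  then show ?thesis by (rule measure_subset_Un_le) measurable
qed

lemma measure_sum_gt_le:
  fixes g :: "'i \<Rightarrow> 'a \<Rightarrow> real"
  assumes "finite F" "card F \<le> n" "0 \<le> e" and [measurable]: "\<And>K. K \<in> F \<Longrightarrow> g K \<in> borel_measurable M"
  shows "measure M {\<omega>\<in>space M. e < (\<Sum>K\<in>F. g K \<omega>)} \<le> (\<Sum>K\<in>F. measure M {\<omega>\<in>space M. e / real n < g K \<omega>})"
proof -
  have "{\<omega>\<in>space M. e < (\<Sum>K\<in>F. g K \<omega>)} \<subseteq> (\<Union>K\<in>F. {\<omega>\<in>space M. e / real n < g K \<omega>})"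
  proof (rule subsetI, rule ccontr)
    fix \<omega> assume \<omega>: "\<omega> \<in> {\<omega>\<in>space M. e < (\<Sum>K\<in>F. g K \<omega>)}"
      and "\<omega> \<notin> (\<Union>K\<in>F. {\<omega>\<in>space M. e / real n < g K \<omega>})"
    then have "(\<Sum>K\<in>F. g K \<omega>) \<le> (\<Sum>K\<in>F. e / real n)" by (intro sum_mono) auto
    also have "\<dots> \<le> e"
      using assms(2,3) by (cases "n = 0") (auto simp: field_simps intro: mult_left_mono)
    finally show False using \<omega> by simp
  qed
  then have "measure M {\<omega>\<in>space M. e < (\<Sum>K\<in>F. g K \<omega>)} \<le> measure M (\<Union>K\<in>F. {\<omega>\<in>space M. e / real n < g K \<omega>})"
    using assms(1) by (intro finite_measure_mono) auto
  also have "\<dots> \<le> (\<Sum>K\<in>F. measure M {\<omega>\<in>space M. e / real n < g K \<omega>})"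
    using assms(1) by (intro measure_UNION_le) auto
  finally show ?thesis .
qed

lemma ilim_iter_eventually:
  fixes S :: "(nat \<Rightarrow> int) \<Rightarrow> 'a \<Rightarrow> 'b::{metric_space,second_countable_topology}"
  assumes "ilim M ls S Y" "Y \<in> borel_measurable M" "\<And>K. S K \<in> borel_measurable M" "e > 0" "\<delta> > 0"
  shows "iter_eventually ls (\<lambda>K. measure M {\<omega>\<in>space M. e < dist (S K \<omega>) (Y \<omega>)} < \<delta>)"
  using assms
proof (induction ls arbitrary: S e \<delta>)
  case (Cons l ls)
  then obtain T where T: "\<And>K. conv_prob M (\<lambda>m. S (K(l := m))) (T K) at_top" "ilim M ls T Y" by auto
  have [measurable]: "T K \<in> borel_measurable M" "S K \<in> borel_measurable M" for K
    using T(1)[of K] Cons.prems unfolding conv_prob_def by simp_all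
  have [measurable]: "Y \<in> borel_measurable M" using Cons.prems by simp
  have "iter_eventually ls (\<lambda>K. measure M {\<omega>\<in>space M. e/2 < dist (T K \<omega>) (Y \<omega>)} < \<delta>/2)"
    using Cons.prems by (intro Cons.IH[OF T(2)]) auto
  then show ?case unfolding iter_eventually.simps
  proof (rule iter_eventually_mono)
    fix K assume K: "measure M {\<omega>\<in>space M. e/2 < dist (T K \<omega>) (Y \<omega>)} < \<delta>/2"
    have "((\<lambda>m. measure M {\<omega>\<in>space M. e/2 < dist (S (K(l := m)) \<omega>) (T K \<omega>)}) \<longlongrightarrow> 0) at_top"
      using T(1)[of K] \<open>e > 0\<close> unfolding conv_prob_def by (meson half_gt_zero)
    then have "eventually (\<lambda>m. measure M {\<omega>\<in>space M. e/2 < dist (S (K(l := m)) \<omega>) (T K \<omega>)} < \<delta>/2) at_top"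
      using Cons.prems by (intro order_tendstoD(2)) auto
    then show "eventually (\<lambda>m. measure M {\<omega>\<in>space M. e < dist (S (K(l := m)) \<omega>) (Y \<omega>)} < \<delta>) at_top"
    proof (rule eventually_mono)
      fix m assume "measure M {\<omega>\<in>space M. e/2 < dist (S (K(l := m)) \<omega>) (T K \<omega>)} < \<delta>/2"
      moreover have "measure M {\<omega>\<in>space M. e/2 + e/2 < dist (S (K(l := m)) \<omega>) (Y \<omega>)}
        \<le> measure M {\<omega>\<in>space M. e/2 < dist (S (K(l := m)) \<omega>) (T K \<omega>)}
          + measure M {\<omega>\<in>space M. e/2 < dist (T K \<omega>) (Y \<omega>)}"
        by (rule measure_dist_gt_add_le) auto
      ultimately show "measure M {\<omega>\<in>space M. e < dist (S (K(l := m)) \<omega>) (Y \<omega>)} < \<delta>" using K by simp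
    qed
  qed
qed simp

lemma conv_prob_AE_cong:
  fixes X X' :: "'i \<Rightarrow> 'a \<Rightarrow> 'b::{metric_space,second_countable_topology}"
  assumes c: "conv_prob M X Z F" and [measurable]: "\<And>x. X' x \<in> borel_measurable M"
    and null: "\<And>x e. e > 0 \<Longrightarrow> measure M {\<omega>\<in>space M. e < dist (X' x \<omega>) (X x \<omega>)} = 0"
  shows "conv_prob M X' Z F"
  unfolding conv_prob_def
proof (intro conjI allI impI)
  have [measurable]: "X x \<in> borel_measurable M" "Z \<in> borel_measurable M" for x
    using c by (simp_all add: conv_prob_def)
  show "X' x \<in> borel_measurable M" "Z \<in> borel_measurable M" for x by simp_all
  fix e :: real assume e: "e > 0"
  show "((\<lambda>x. measure M {\<omega>\<in>space M. e < dist (X' x \<omega>) (Z \<omega>)}) \<longlongrightarrow> 0) F"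
  proof (rule tendsto_zero_nonnegI)
    fix \<delta> :: real assume "\<delta> > 0"
    have "((\<lambda>x. measure M {\<omega>\<in>space M. e/2 < dist (X x \<omega>) (Z \<omega>)}) \<longlongrightarrow> 0) F"
      using c e unfolding conv_prob_def by (meson half_gt_zero)
    then have "eventually (\<lambda>x. measure M {\<omega>\<in>space M. e/2 < dist (X x \<omega>) (Z \<omega>)} < \<delta>) F"
      using \<open>\<delta> > 0\<close> by (rule order_tendstoD)
    then show "eventually (\<lambda>x. measure M {\<omega>\<in>space M. e < dist (X' x \<omega>) (Z \<omega>)} \<le> \<delta>) F"
    proof (rule eventually_mono)
      fix x assume "measure M {\<omega>\<in>space M. e/2 < dist (X x \<omega>) (Z \<omega>)} < \<delta>"
      moreover have "measure M {\<omega>\<in>space M. e/2 + e/2 < dist (X' x \<omega>) (Z \<omega>)}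
          \<le> measure M {\<omega>\<in>space M. e/2 < dist (X' x \<omega>) (X x \<omega>)} + measure M {\<omega>\<in>space M. e/2 < dist (X x \<omega>) (Z \<omega>)}"
        by (rule measure_dist_gt_add_le) auto
      ultimately show "measure M {\<omega>\<in>space M. e < dist (X' x \<omega>) (Z \<omega>)} \<le> \<delta>" using null[of "e/2" x] e by simp
    qed
  qed simp
qed


lemma ilim_AE_cong:
  fixes S S' :: "(nat \<Rightarrow> int) \<Rightarrow> 'a \<Rightarrow> 'b::{metric_space,second_countable_topology}"
  assumes "ilim M (l # ls) S Y" and "\<And>K. S' K \<in> borel_measurable M"
    and "\<And>K e. e > 0 \<Longrightarrow> measure M {\<omega>\<in>space M. e < dist (S' K \<omega>) (S K \<omega>)} = 0"
  shows "ilim M (l # ls) S' Y"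
proof -
  obtain T where "\<And>K. conv_prob M (\<lambda>m. S (K(l := m))) (T K) at_top" "ilim M ls T Y"
    using assms(1) by auto
  moreover have "conv_prob M (\<lambda>m. S' (K(l := m))) (T K) at_top" for K
    using assms(2,3) by (intro conv_prob_AE_cong[OF calculation(1)])
  ultimately show ?thesis by auto
qed

lemma measure_norm_gt_small:
  fixes X :: "'a \<Rightarrow> 'b::real_normed_vector"
  assumes [measurable]: "X \<in> borel_measurable M" and "\<delta> > 0"
  shows "\<exists>c::nat. measure M {\<omega>\<in>space M. real c < norm (X \<omega>)} < \<delta>"
proof -
  define A where "A c = {\<omega>\<in>space M. real c < norm (X \<omega>)}" for c :: nat
  have "(\<lambda>c. measure M (A c)) \<longlonglongrightarrow> measure M (\<Inter>c. A c)"
    by (rule finite_Lim_measure_decseq) (auto simp: A_def decseq_def)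
  moreover have "\<omega> \<notin> A (nat \<lceil>norm (X \<omega>)\<rceil>)" for \<omega>
    by (simp add: A_def not_less real_nat_ceiling_ge)
  then have "(\<Inter>c. A c) = {}" by blast
  ultimately have "eventually (\<lambda>c. measure M (A c) < \<delta>) sequentially"
    using \<open>\<delta> > 0\<close> by (intro order_tendstoD(2)) simp_all
  then show ?thesis by (auto simp: A_def eventually_sequentially)
qed

lemma power_scaled_small:
  fixes X :: "'a \<Rightarrow> 'b::real_normed_vector"
  assumes "X \<in> borel_measurable M" and q: "0 \<le> q" "q < 1" and "e > 0" "\<delta> > 0"
  shows "\<exists>k. \<forall>n\<ge>k. measure M {\<omega>\<in>space M. e < q ^ n * norm (X \<omega>)} \<le> \<delta>"
proof -
  obtain c where c: "measure M {\<omega>\<in>space M. real c < norm (X \<omega>)} < \<delta>"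
    using measure_norm_gt_small[OF assms(1) \<open>\<delta> > 0\<close>] by blast
  have "(\<lambda>k. q ^ k * real c) \<longlonglongrightarrow> 0"
    using q by (intro tendsto_mult_left_zero LIMSEQ_power_zero) auto
  then have "eventually (\<lambda>k. q ^ k * real c < e) sequentially"
    using \<open>e > 0\<close> by (rule order_tendstoD(2))
  then obtain k where k: "q ^ k * real c < e"
    by (auto simp: eventually_sequentially)
  have "measure M {\<omega>\<in>space M. e < q ^ n * norm (X \<omega>)} \<le> \<delta>" if "k \<le> n" for n
  proof -
    have "q ^ n \<le> q ^ k" using q that by (intro power_decreasing) auto
    then have "q ^ n * norm (X \<omega>) \<le> q ^ k * real c" if "norm (X \<omega>) \<le> real c" for \<omega>
      using q that by (intro mult_mono) auto
    then have "{\<omega>\<in>space M. e < q ^ n * norm (X \<omega>)} \<subseteq> {\<omega>\<in>space M. real c < norm (X \<omega>)}"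
      using k by (force simp: not_less[symmetric])
    then have "measure M {\<omega>\<in>space M. e < q ^ n * norm (X \<omega>)} \<le> measure M {\<omega>\<in>space M. real c < norm (X \<omega>)}"
      using assms(1) by (intro finite_measure_mono) measurable
    then show ?thesis using c by simp
  qed
  then show ?thesis by blast
qed

end

section \<open>Rectangles in the lattice\<close>

lemma finite_box: "finite (box N t M)"
proof -
  have "box N t M \<subseteq> (\<lambda>f l. if l < N then f l else 0) ` (PiE {..<N} (\<lambda>l. {- M l..t l}))"
  proof
    fix j assume j: "j \<in> box N t M"
    then have "j = (\<lambda>l. if l < N then restrict j {..<N} l else 0)"
      and "restrict j {..<N} \<in> PiE {..<N} (\<lambda>l. {- M l..t l})"
      by (auto simp: box_def)
    then show "j \<in> (\<lambda>f l. if l < N then f l else 0) ` (PiE {..<N} (\<lambda>l. {- M l..t l}))" by blast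
  qed
  then show ?thesis by (rule finite_subset) (intro finite_imageI finite_PiE, auto)
qed

lemma box_subset_ZN: "box N t M \<subseteq> ZN N"
  by (auto simp: box_def ZN_def)

lemma box_shift:
  assumes "d \<in> ZN N"
  shows "box N (\<lambda>l. t l + d l) M = (\<lambda>k l. k l + d l) ` box N t (\<lambda>l. M l + d l)"
proof (rule set_eqI, rule iffI)
  fix j assume "j \<in> box N (\<lambda>l. t l + d l) M"
  then have "(\<lambda>l. j l - d l) \<in> box N t (\<lambda>l. M l + d l)"
    using assms by (auto simp: box_def ZN_def)
  then show "j \<in> (\<lambda>k l. k l + d l) ` box N t (\<lambda>l. M l + d l)"
    by (rule rev_image_eqI) simp
qed (use assms in \<open>auto simp: box_def ZN_def\<close>)

text \<open>For \<open>M' \<ge> M\<close>, \<open>box N (corner t M K) M'\<close> is the part of \<open>box N t M'\<close> lying below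
  \<open>-M l\<close> in every direction \<open>l \<in> K\<close>.\<close>

definition corner :: "(nat \<Rightarrow> int) \<Rightarrow> (nat \<Rightarrow> int) \<Rightarrow> nat set \<Rightarrow> nat \<Rightarrow> int" where
  "corner t M K = (\<lambda>l. if l \<in> K then min (t l) (- M l - 1) else t l)"

lemma corner_in_ZN: "t \<in> ZN N \<Longrightarrow> K \<subseteq> {..<N} \<Longrightarrow> corner t M K \<in> ZN N"
  by (auto simp: corner_def ZN_def)

lemma corner_upd: "l \<notin> K \<Longrightarrow> corner t (M(l := m)) K = corner t M K"
  by (auto simp: corner_def)

lemma corner_empty [simp]: "corner t M {} = t"
  by (simp add: corner_def)

lemma corner_le_shift:
  assumes "l \<in> K" "l < N" "int k + (\<Sum>l<N. \<bar>t l\<bar>) \<le> M l"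
  shows "corner t M K l \<le> t l - int k"
proof -
  have "\<bar>t l\<bar> \<le> (\<Sum>l<N. \<bar>t l\<bar>)" using assms(2) by (intro member_le_sum) auto
  then show ?thesis using assms(1,3) abs_ge_minus_self[of "t l"] by (simp add: corner_def)
qed

lemma prod_of_bool: "finite K \<Longrightarrow> (\<Prod>l\<in>K. of_bool (P l) :: 'a::comm_semiring_1) = of_bool (\<forall>l\<in>K. P l)"
  by (induction K rule: finite_induct) auto

lemma sum_Pow_alternating_of_bool:
  assumes "finite A"
  shows "(\<Sum>K\<in>Pow A. (-1::real)^card K * of_bool (\<forall>l\<in>K. a l)) = of_bool (\<forall>l\<in>A. \<not> a l)"
proof -
  have "(\<Sum>K\<in>Pow A. (-1::real)^card K * of_bool (\<forall>l\<in>K. a l))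
      = (\<Sum>K\<in>Pow A. (-1)^card K * (\<Prod>l\<in>K. of_bool (a l)) * (\<Prod>l\<in>A - K. 1))"
    using assms by (intro sum.cong refl) (auto simp: prod_of_bool finite_subset)
  also have "\<dots> = (\<Prod>l\<in>A. 1 - of_bool (a l))"
    by (rule prod_diff_conv_sum[OF assms, symmetric])
  also have "\<dots> = (\<Prod>l\<in>A. of_bool (\<not> a l))"
    by (intro prod.cong) auto
  finally show ?thesis using assms by (simp add: prod_of_bool)
qed

lemma sum_box_incl_excl:
  fixes f :: "(nat \<Rightarrow> int) \<Rightarrow> 'b::real_vector"
  assumes "\<forall>l<N. M l \<le> M' l"
  shows "(\<Sum>K\<in>Pow {..<N}. (-1::real)^card K *\<^sub>R (\<Sum>j\<in>box N (corner t M K) M'. f j)) = (\<Sum>j\<in>box N t M. f j)"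
proof -
  define B where "B = box N t M'"
  have "finite B" by (simp add: B_def finite_box)
  have sub: "box N (corner t M K) M' \<subseteq> B" for K
    by (auto simp: B_def box_def corner_def)
  have "box N t M \<subseteq> B" using assms by (force simp: B_def box_def)
  have coeff: "(\<Sum>K\<in>Pow {..<N}. (-1::real)^card K * of_bool (j \<in> box N (corner t M K) M'))
      = of_bool (j \<in> box N t M)" if "j \<in> B" for j
  proof -
    have "j \<in> box N (corner t M K) M' \<longleftrightarrow> (\<forall>l\<in>K. j l \<le> - M l - 1)" if "K \<subseteq> {..<N}" for K
      using \<open>j \<in> B\<close> that by (auto simp: B_def box_def corner_def)
    then have "(\<Sum>K\<in>Pow {..<N}. (-1::real)^card K * of_bool (j \<in> box N (corner t M K) M'))
        = (\<Sum>K\<in>Pow {..<N}. (-1::real)^card K * of_bool (\<forall>l\<in>K. j l \<le> - M l - 1))"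
      by (intro sum.cong refl) auto
    also have "\<dots> = of_bool (\<forall>l\<in>{..<N}. \<not> j l \<le> - M l - 1)"
      by (rule sum_Pow_alternating_of_bool) simp
    also have "\<dots> = of_bool (j \<in> box N t M)"
      using \<open>j \<in> B\<close> by (force simp: B_def box_def)
    finally show ?thesis .
  qed
  have "(\<Sum>K\<in>Pow {..<N}. (-1::real)^card K *\<^sub>R (\<Sum>j\<in>box N (corner t M K) M'. f j))
     = (\<Sum>K\<in>Pow {..<N}. (-1::real)^card K *\<^sub>R (\<Sum>j\<in>B. of_bool (j \<in> box N (corner t M K) M') *\<^sub>R f j))"
    using \<open>finite B\<close> sub by (intro sum.cong refl arg_cong[where f="\<lambda>x. _ *\<^sub>R x"] sum.mono_neutral_cong_left) auto
  also have "\<dots> = (\<Sum>j\<in>B. (\<Sum>K\<in>Pow {..<N}. (-1::real)^card K * of_bool (j \<in> box N (corner t M K) M')) *\<^sub>R f j)"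
    unfolding scaleR_sum_right scaleR_sum_left scaleR_scaleR by (rule sum.swap)
  also have "\<dots> = (\<Sum>j\<in>B. of_bool (j \<in> box N t M) *\<^sub>R f j)"
    using coeff by (intro sum.cong) auto
  also have "\<dots> = (\<Sum>j\<in>box N t M. f j)"
    using \<open>finite B\<close> \<open>box N t M \<subseteq> B\<close> by (intro sum.mono_neutral_cong_right) auto
  finally show ?thesis .
qed

lemma psum_eq_alternating_corner_psum:
  assumes "\<forall>l<N. M l \<le> M' l"
  shows "psum N \<Theta> G t M \<omega> = (\<Sum>K\<in>Pow {..<N}. (-1::real)^card K *\<^sub>R psum N \<Theta> G (corner t M K) M' \<omega>)"
  unfolding psum_def by (rule sum_box_incl_excl[OF assms, symmetric])

section \<open>Fields in \<open>GTheta\<close> and their limit\<close>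

locale GTheta_limit = prob_space P for P :: "'a measure" +
  fixes N :: nat and \<Theta> :: "nat \<Rightarrow> real^'n::finite^'n"
    and G :: "(nat \<Rightarrow> int) \<Rightarrow> 'a \<Rightarrow> real^'n" and Y :: "(nat \<Rightarrow> int) \<Rightarrow> 'a \<Rightarrow> real^'n"
  assumes posdef: "\<forall>l<N. sym_posdef (\<Theta> l)"
    and commuting: "\<forall>k<N. \<forall>l<N. \<Theta> k ** \<Theta> l = \<Theta> l ** \<Theta> k"
    and G_in_GTheta: "G \<in> GTheta P N \<Theta>"
    and ilim_Y: "\<forall>t\<in>ZN N. ilim P (rev [0..<N]) (psum N \<Theta> G t) (Y t)"
begin

lemma incr_measurable: "t \<in> ZN N \<Longrightarrow> incr N G t \<in> borel_measurable P"
proof -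
  assume t: "t \<in> ZN N"
  have "G (\<lambda>l. t l - i l) \<in> borel_measurable P" if "i \<in> bits N" for i
    using G_in_GTheta t that by (auto simp: GTheta_def ZN_def bits_def)
  then show ?thesis unfolding incr_def[abs_def]
    by (intro borel_measurable_sum borel_measurable_scaleR borel_measurable_const) auto
qed

lemma psum_measurable: "t \<in> ZN N \<Longrightarrow> psum N \<Theta> G t M \<in> borel_measurable P"
  unfolding psum_def[abs_def] using box_subset_ZN
  by (intro borel_measurable_sum measurable_compose[OF incr_measurable borel_measurable_matrix_vector_mult])
    auto

lemma Y_measurable: "t \<in> ZN N \<Longrightarrow> Y t \<in> borel_measurable P"
  using ilim_Y by (auto intro: ilim_measurable psum_measurable)

lemma iter_eventually_psum_close:
  "t \<in> ZN N \<Longrightarrow> e > 0 \<Longrightarrow> \<delta> > 0 \<Longrightarrow>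
   iter_eventually (rev [0..<N]) (\<lambda>M. measure P {\<omega>\<in>space P. e < dist (psum N \<Theta> G t M \<omega>) (Y t \<omega>)} < \<delta>)"
  using ilim_Y by (intro ilim_iter_eventually Y_measurable psum_measurable) auto

lemma measure_incr_shift:
  assumes B: "finite B" "B \<subseteq> ZN N" and d: "d \<in> ZN N"
    and H: "H \<in> borel_measurable (PiM B (\<lambda>_. borel))" and U: "U \<in> sets borel"
  shows "measure P {\<omega>\<in>space P. H (\<lambda>k\<in>B. incr N G (\<lambda>l. k l + d l) \<omega>) \<in> U}
       = measure P {\<omega>\<in>space P. H (\<lambda>k\<in>B. incr N G k \<omega>) \<in> U}"
proof -
  define F1 where "F1 \<omega> = (\<lambda>k\<in>B. incr N G (\<lambda>l. k l + d l) \<omega>)" for \<omega>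
  define F0 where "F0 \<omega> = (\<lambda>k\<in>B. incr N G k \<omega>)" for \<omega>
  define A where "A = H -` U \<inter> space (PiM B (\<lambda>_. borel))"
  have F1: "F1 \<in> measurable P (PiM B (\<lambda>_. borel))"
    unfolding F1_def using B d by (intro measurable_restrict incr_measurable) (auto simp: ZN_def)
  have F0: "F0 \<in> measurable P (PiM B (\<lambda>_. borel))"
    unfolding F0_def using B by (intro measurable_restrict incr_measurable) auto
  have "distr P (PiM B (\<lambda>_. borel)) F1 = distr P (PiM B (\<lambda>_. borel)) F0"
    using G_in_GTheta d B unfolding GTheta_def stationary_incr_def F1_def F0_def by blast
  moreover have A: "A \<in> sets (PiM B (\<lambda>_. borel))"
    unfolding A_def using H U by (rule measurable_sets)
  ultimately have "measure P (F1 -` A \<inter> space P) = measure P (F0 -` A \<inter> space P)"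
    using measure_distr[OF F1 A] measure_distr[OF F0 A] by simp
  moreover have "F1 -` A \<inter> space P = {\<omega>\<in>space P. H (F1 \<omega>) \<in> U}"
    "F0 -` A \<inter> space P = {\<omega>\<in>space P. H (F0 \<omega>) \<in> U}"
    using F1 F0 by (auto simp: A_def measurable_space)
  ultimately show ?thesis by (simp add: F1_def F0_def)
qed

lemma measure_psum_shift:
  assumes s: "s \<in> ZN N" and t: "t \<in> ZN N" and U: "U \<in> sets borel"
  defines "d \<equiv> \<lambda>l. s l - t l"
  shows "measure P {\<omega>\<in>space P. psum N \<Theta> G s M \<omega> \<in> U}
       = measure P {\<omega>\<in>space P. mexp (tstar N d \<Theta>) *v psum N \<Theta> G t (\<lambda>l. M l + d l) \<omega> \<in> U}"
proof -
  define B where "B = box N t (\<lambda>l. M l + d l)"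
  define H where "H x = mexp (tstar N d \<Theta>) *v (\<Sum>k\<in>B. mexp (tstar N k \<Theta>) *v x k)"
    for x :: "(nat \<Rightarrow> int) \<Rightarrow> real^'n"
  have "finite B" "B \<subseteq> ZN N" by (simp_all add: B_def finite_box box_subset_ZN)
  have "d \<in> ZN N" using s t by (auto simp: ZN_def d_def)
  have H: "H \<in> borel_measurable (PiM B (\<lambda>_. borel))"
    unfolding H_def using measurable_component_singleton
    by (intro borel_measurable_sum measurable_compose[OF _ borel_measurable_matrix_vector_mult]) auto
  have "psum N \<Theta> G s M \<omega> = H (\<lambda>k\<in>B. incr N G (\<lambda>l. k l + d l) \<omega>)" for \<omega>
  proof -
    have "s = (\<lambda>l. t l + d l)" by (simp add: d_def)
    moreover have "inj_on (\<lambda>k l. k l + d l) B" by (rule inj_onI) (simp add: fun_eq_iff)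
    ultimately have "psum N \<Theta> G s M \<omega> = (\<Sum>k\<in>B. mexp (tstar N (\<lambda>l. k l + d l) \<Theta>) *v incr N G (\<lambda>l. k l + d l) \<omega>)"
      unfolding psum_def B_def by (simp add: box_shift[OF \<open>d \<in> ZN N\<close>] sum.reindex)
    also have "\<dots> = H (\<lambda>k\<in>B. incr N G (\<lambda>l. k l + d l) \<omega>)"
      by (simp add: H_def mexp_tstar_add[OF commuting] matrix_vector_mul_assoc[symmetric]
          matrix_vector_mult_sum)
    finally show ?thesis .
  qed
  moreover have "mexp (tstar N d \<Theta>) *v psum N \<Theta> G t (\<lambda>l. M l + d l) \<omega> = H (\<lambda>k\<in>B. incr N G k \<omega>)" for \<omega>
    unfolding H_def psum_def B_def by simp
  ultimately show ?thesis
    using measure_incr_shift[OF \<open>finite B\<close> \<open>B \<subseteq> ZN N\<close> \<open>d \<in> ZN N\<close> H U] by simp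
qed

lemma measure_limit_norm_gt_le:
  assumes s: "s \<in> ZN N" and t: "t \<in> ZN N" and e: "e > 0" and r: "r \<le> 1"
    and contr: "\<And>x. norm (mexp (tstar N (\<lambda>l. s l - t l) \<Theta>) *v x) \<le> r * norm x"
  shows "measure P {\<omega>\<in>space P. e < norm (Y s \<omega>)} \<le> measure P {\<omega>\<in>space P. e/2 < r * norm (Y t \<omega>)}"
proof (rule field_le_epsilon)
  define d where "d = (\<lambda>l. s l - t l)"
  have [measurable]: "Y s \<in> borel_measurable P" "Y t \<in> borel_measurable P"
    "psum N \<Theta> G s M \<in> borel_measurable P" "psum N \<Theta> G t M \<in> borel_measurable P" for M
    using s t by (auto intro: Y_measurable psum_measurable)
  fix \<delta> :: real assume "\<delta> > 0"
  have "iter_eventually (rev [0..<N]) (\<lambda>M. measure P {\<omega>\<in>space P. e/4 < dist (psum N \<Theta> G s M \<omega>) (Y s \<omega>)} < \<delta>/2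
       \<and> measure P {\<omega>\<in>space P. e/4 < dist (psum N \<Theta> G t (\<lambda>l. M l + d l) \<omega>) (Y t \<omega>)} < \<delta>/2)"
    using e \<open>\<delta> > 0\<close>
    by (intro iter_eventually_conj iter_eventually_psum_close s iter_eventually_shift[OF iter_eventually_psum_close[OF t]]) auto
  then obtain M where
    M_s: "measure P {\<omega>\<in>space P. e/4 < dist (psum N \<Theta> G s M \<omega>) (Y s \<omega>)} < \<delta>/2" and
    M_t: "measure P {\<omega>\<in>space P. e/4 < dist (psum N \<Theta> G t (\<lambda>l. M l + d l) \<omega>) (Y t \<omega>)} < \<delta>/2"
    using iter_eventually_happens by blast
  define p where "p \<omega> = psum N \<Theta> G t (\<lambda>l. M l + d l) \<omega>" for \<omega>
  have [measurable]: "p \<in> borel_measurable P" unfolding p_def by measurable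
  have "measure P {\<omega>\<in>space P. e/4 + 3*e/4 < dist (Y s \<omega>) 0}
      \<le> measure P {\<omega>\<in>space P. e/4 < dist (Y s \<omega>) (psum N \<Theta> G s M \<omega>)}
        + measure P {\<omega>\<in>space P. 3*e/4 < dist (psum N \<Theta> G s M \<omega>) 0}"
    by (rule measure_dist_gt_add_le) auto
  also have "measure P {\<omega>\<in>space P. 3*e/4 < dist (psum N \<Theta> G s M \<omega>) 0}
      = measure P {\<omega>\<in>space P. mexp (tstar N d \<Theta>) *v p \<omega> \<in> {x. 3*e/4 < norm x}}"
    unfolding d_def p_def using measure_psum_shift[OF s t, of "{x. 3*e/4 < norm x}"]
    by (simp add: borel_open open_Collect_less continuous_intros)
  also have "\<dots> \<le> measure P {\<omega>\<in>space P. e/4 < dist (p \<omega>) (Y t \<omega>)}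
      + measure P {\<omega>\<in>space P. e/2 < r * norm (Y t \<omega>)}"
  proof (rule measure_subset_Un_le)
    show "{\<omega>\<in>space P. mexp (tstar N d \<Theta>) *v p \<omega> \<in> {x. 3*e/4 < norm x}}
        \<subseteq> {\<omega>\<in>space P. e/4 < dist (p \<omega>) (Y t \<omega>)} \<union> {\<omega>\<in>space P. e/2 < r * norm (Y t \<omega>)}"
    proof (intro subsetI)
      fix \<omega> assume "\<omega> \<in> {\<omega>\<in>space P. mexp (tstar N d \<Theta>) *v p \<omega> \<in> {x. 3*e/4 < norm x}}"
      then show "\<omega> \<in> {\<omega>\<in>space P. e/4 < dist (p \<omega>) (Y t \<omega>)} \<union> {\<omega>\<in>space P. e/2 < r * norm (Y t \<omega>)}"
        using norm_mult_vec_le_dist_add[OF contr[folded d_def] r, of "p \<omega>" "Y t \<omega>"] by simp linarith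
    qed
  qed measurable
  finally show "measure P {\<omega>\<in>space P. e < norm (Y s \<omega>)} \<le> measure P {\<omega>\<in>space P. e/2 < r * norm (Y t \<omega>)} + \<delta>"
    using M_s M_t unfolding p_def by (simp add: dist_commute)
qed

lemma limit_far_small:
  assumes t: "t \<in> ZN N" and "e > 0" "\<delta> > 0"
  shows "\<exists>k::nat. \<forall>s\<in>ZN N. (\<forall>l<N. s l \<le> t l) \<longrightarrow> (\<exists>l<N. s l \<le> t l - int k) \<longrightarrow>
           measure P {\<omega>\<in>space P. e < norm (Y s \<omega>)} \<le> \<delta>"
proof -
  obtain q where q: "0 \<le> q" "q < 1" and contr: "\<And>d x. \<forall>l<N. d l \<le> 0 \<Longrightarrow>
      norm (mexp (tstar N d \<Theta>) *v x) \<le> q ^ (\<Sum>l<N. nat (- d l)) * norm x"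
    using mexp_tstar_contraction[OF posdef commuting] by blast
  obtain k where k: "\<And>n. k \<le> n \<Longrightarrow> measure P {\<omega>\<in>space P. e/2 < q ^ n * norm (Y t \<omega>)} \<le> \<delta>"
    using power_scaled_small[OF Y_measurable[OF t] q, of "e/2" \<delta>] \<open>e > 0\<close> \<open>\<delta> > 0\<close> by auto
  have "measure P {\<omega>\<in>space P. e < norm (Y s \<omega>)} \<le> \<delta>"
    if s: "s \<in> ZN N" and le: "\<forall>l<N. s l \<le> t l" and far: "\<exists>l<N. s l \<le> t l - int k" for s
  proof -
    define n where "n = (\<Sum>l<N. nat (t l - s l))"
    have "k \<le> n"
    proof -
      obtain l where "l < N" "s l \<le> t l - int k" using far by blast
      then have "k \<le> nat (t l - s l)" by simp
      also have "\<dots> \<le> n" unfolding n_def using \<open>l < N\<close> by (intro member_le_sum) auto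
      finally show ?thesis .
    qed
    have "norm (mexp (tstar N (\<lambda>l. s l - t l) \<Theta>) *v x) \<le> q ^ n * norm x" for x
      using contr[of "\<lambda>l. s l - t l" x] le by (simp add: n_def)
    then have "measure P {\<omega>\<in>space P. e < norm (Y s \<omega>)} \<le> measure P {\<omega>\<in>space P. e/2 < q ^ n * norm (Y t \<omega>)}"
      using q \<open>e > 0\<close> by (intro measure_limit_norm_gt_le[OF s t]) (auto simp: power_le_one)
    also have "\<dots> \<le> \<delta>" using k[OF \<open>k \<le> n\<close>] .
    finally show ?thesis .
  qed
  then show ?thesis by blast
qed

text \<open>What is left of the partial sum once the limits in the coordinates \<open>L\<close> have been
  taken; for \<open>L = {}\<close> it is almost surely the partial sum itself.\<close>

definition corner_sum :: "(nat \<Rightarrow> int) \<Rightarrow> nat set \<Rightarrow> (nat \<Rightarrow> int) \<Rightarrow> 'a \<Rightarrow> real^'n" where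
  "corner_sum t L M \<omega> = (\<Sum>K\<in>Pow ({..<N} - L). (-1::real)^card K *\<^sub>R Y (corner t M K) \<omega>)"

lemma corner_sum_measurable [measurable]: "t \<in> ZN N \<Longrightarrow> corner_sum t L M \<in> borel_measurable P"
  unfolding corner_sum_def[abs_def]
  by (intro borel_measurable_sum borel_measurable_scaleR borel_measurable_const Y_measurable corner_in_ZN)
    auto

lemma corner_sum_all: "corner_sum t {..<N} M = Y t"
  by (simp add: corner_sum_def fun_eq_iff)

lemma corner_sum_upd: "l \<in> L \<Longrightarrow> corner_sum t L (M(l := m)) = corner_sum t L M"
  unfolding corner_sum_def fun_eq_iff by (intro allI sum.cong refl) (subst corner_upd, auto)

lemma corner_sum_insert:
  assumes "l < N" "l \<notin> L"
  shows "corner_sum t L M \<omega> = corner_sum t (insert l L) M \<omega>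
    + (\<Sum>K\<in>{K\<in>Pow ({..<N} - L). l \<in> K}. (-1::real)^card K *\<^sub>R Y (corner t M K) \<omega>)"
proof -
  have "Pow ({..<N} - L) \<inter> {K. l \<notin> K} = Pow ({..<N} - insert l L)"
    "Pow ({..<N} - L) - {K. l \<notin> K} = {K\<in>Pow ({..<N} - L). l \<in> K}"
    by auto
  then show ?thesis
    unfolding corner_sum_def using sum.Int_Diff[of "Pow ({..<N} - L)" _ "{K. l \<notin> K}"] by simp
qed

lemma psum_eq_corner_sum_AE:
  assumes t: "t \<in> ZN N" and e: "e > 0"
  shows "measure P {\<omega>\<in>space P. e < dist (psum N \<Theta> G t M \<omega>) (corner_sum t {} M \<omega>)} = 0"
proof -
  define F where "F = Pow {..<N}"
  have "finite F" "F \<noteq> {}" by (auto simp: F_def)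
  then have n: "real (card F) > 0" by (simp add: card_gt_0_iff)
  have Z: "K \<in> F \<Longrightarrow> corner t M K \<in> ZN N" for K using t by (intro corner_in_ZN) (auto simp: F_def)
  have [measurable]: "psum N \<Theta> G t M \<in> borel_measurable P" "corner_sum t {} M \<in> borel_measurable P"
    using t by (auto intro: psum_measurable)
  have "measure P {\<omega>\<in>space P. e < dist (psum N \<Theta> G t M \<omega>) (corner_sum t {} M \<omega>)} \<le> 0"
  proof (rule field_le_epsilon)
    fix \<delta> :: real assume "\<delta> > 0"
    define D where "D M' K \<omega> = dist (psum N \<Theta> G (corner t M K) M' \<omega>) (Y (corner t M K) \<omega>)" for M' K \<omega>
    have "iter_eventually (rev [0..<N]) (\<lambda>M'. (\<forall>K\<in>F. measure P {\<omega>\<in>space P. e / card F < D M' K \<omega>} < \<delta> / card F)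
        \<and> (\<forall>l\<in>set (rev [0..<N]). M l \<le> M' l))"
      unfolding D_def using e \<open>\<delta> > 0\<close> n Z
      by (intro iter_eventually_conj iter_eventually_ball \<open>finite F\<close> iter_eventually_psum_close iter_eventually_ge)
        auto
    then obtain M' where M': "\<forall>K\<in>F. measure P {\<omega>\<in>space P. e / card F < D M' K \<omega>} < \<delta> / card F"
      "\<forall>l<N. M l \<le> M' l"
      using iter_eventually_happens by fastforce
    have [measurable]: "K \<in> F \<Longrightarrow> D M' K \<in> borel_measurable P" for K
      unfolding D_def[abs_def] using Z by (intro borel_measurable_dist psum_measurable Y_measurable) auto
    have "dist (psum N \<Theta> G t M \<omega>) (corner_sum t {} M \<omega>)
        = norm (\<Sum>K\<in>F. (-1::real)^card K *\<^sub>R (psum N \<Theta> G (corner t M K) M' \<omega> - Y (corner t M K) \<omega>))" for \<omega>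
      by (simp add: psum_eq_alternating_corner_psum[OF M'(2)] corner_sum_def F_def dist_norm
          sum_subtractf scaleR_diff_right)
    also have "\<dots> \<omega> \<le> (\<Sum>K\<in>F. D M' K \<omega>)" for \<omega>
      by (rule order_trans[OF norm_sum]) (simp add: D_def dist_norm)
    finally have "measure P {\<omega>\<in>space P. e < dist (psum N \<Theta> G t M \<omega>) (corner_sum t {} M \<omega>)}
        \<le> measure P {\<omega>\<in>space P. e < (\<Sum>K\<in>F. D M' K \<omega>)}"
      by (intro finite_measure_mono) (auto intro: less_le_trans)
    also have "\<dots> \<le> (\<Sum>K\<in>F. measure P {\<omega>\<in>space P. e / card F < D M' K \<omega>})"
      using e by (intro measure_sum_gt_le \<open>finite F\<close>) auto
    also have "\<dots> \<le> (\<Sum>K\<in>F. \<delta> / card F)"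
      using M'(1) by (intro sum_mono) (auto simp: less_imp_le)
    finally show "measure P {\<omega>\<in>space P. e < dist (psum N \<Theta> G t M \<omega>) (corner_sum t {} M \<omega>)} \<le> 0 + \<delta>"
      using n by simp
  qed
  then show ?thesis using measure_nonneg[of P] by (meson antisym)
qed

lemma corner_terms_small:
  assumes t: "t \<in> ZN N" and e: "e > 0" and \<delta>: "\<delta> > 0"
  shows "\<exists>K0. \<forall>F M. F \<subseteq> Pow {..<N} \<longrightarrow> (\<forall>K\<in>F. \<exists>l\<in>K. K0 \<le> M l) \<longrightarrow>
           measure P {\<omega>\<in>space P. e < norm (\<Sum>K\<in>F. (-1::real)^card K *\<^sub>R Y (corner t M K) \<omega>)} \<le> \<delta>"
proof -
  define n :: nat where "n = 2 ^ N"
  have n: "real n > 0" by (simp add: n_def)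
  have "e / n > 0" "\<delta> / n > 0" using e \<delta> n by simp_all
  from limit_far_small[OF t this] obtain k :: nat where k: "\<forall>s\<in>ZN N. (\<forall>l<N. s l \<le> t l) \<longrightarrow>
      (\<exists>l<N. s l \<le> t l - int k) \<longrightarrow> measure P {\<omega>\<in>space P. e / n < norm (Y s \<omega>)} \<le> \<delta> / n"
    by blast
  define K0 where "K0 = int k + (\<Sum>l<N. \<bar>t l\<bar>)"
  have "measure P {\<omega>\<in>space P. e < norm (\<Sum>K\<in>F. (-1::real)^card K *\<^sub>R Y (corner t M K) \<omega>)} \<le> \<delta>"
    if F: "F \<subseteq> Pow {..<N}" and large: "\<forall>K\<in>F. \<exists>l\<in>K. K0 \<le> M l" for F M
  proof -
    have "finite F" using F finite_subset by blast
    have "card F \<le> n" using card_mono[OF _ F] card_Pow[of "{..<N}"] by (simp add: n_def)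
    have Z: "K \<in> F \<Longrightarrow> corner t M K \<in> ZN N" for K using t F by (intro corner_in_ZN) auto
    have [measurable]: "K \<in> F \<Longrightarrow> (\<lambda>\<omega>. norm (Y (corner t M K) \<omega>)) \<in> borel_measurable P" for K
      by (rule measurable_compose[OF Y_measurable[OF Z] borel_measurable_norm])
    have small: "measure P {\<omega>\<in>space P. e / n < norm (Y (corner t M K) \<omega>)} \<le> \<delta> / n" if K: "K \<in> F" for K
    proof -
      have below: "\<forall>l<N. corner t M K l \<le> t l" by (simp add: corner_def)
      obtain l where "l \<in> K" "K0 \<le> M l" using bspec[OF large K] ..
      have "l < N" using \<open>l \<in> K\<close> F K by blast
      then have "\<exists>l<N. corner t M K l \<le> t l - int k"
        using \<open>l \<in> K\<close> \<open>K0 \<le> M l\<close> unfolding K0_def by (blast intro: corner_le_shift)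
      then show ?thesis using mp[OF mp[OF bspec[OF k Z[OF K]] below]] by blast
    qed
    have "norm (\<Sum>K\<in>F. (-1::real)^card K *\<^sub>R Y (corner t M K) \<omega>) \<le> (\<Sum>K\<in>F. norm (Y (corner t M K) \<omega>))" for \<omega>
      by (rule order_trans[OF norm_sum]) simp
    then have "measure P {\<omega>\<in>space P. e < norm (\<Sum>K\<in>F. (-1::real)^card K *\<^sub>R Y (corner t M K) \<omega>)}
        \<le> measure P {\<omega>\<in>space P. e < (\<Sum>K\<in>F. norm (Y (corner t M K) \<omega>))}"
      using \<open>finite F\<close> by (intro finite_measure_mono) (auto intro: less_le_trans)
    also have "\<dots> \<le> (\<Sum>K\<in>F. measure P {\<omega>\<in>space P. e / n < norm (Y (corner t M K) \<omega>)})"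
      using e \<open>finite F\<close> \<open>card F \<le> n\<close> by (intro measure_sum_gt_le) auto
    also have "\<dots> \<le> card F * (\<delta> / n)"
      using sum_mono[of F _ "\<lambda>_. \<delta> / n", OF small] by simp
    also have "\<dots> \<le> \<delta>"
      using \<open>card F \<le> n\<close> n \<delta> by (simp add: field_simps mult_right_mono)
    finally show ?thesis .
  qed
  then show ?thesis by blast
qed

lemma corner_sum_tendsto:
  assumes t: "t \<in> ZN N" and l: "l < N" "l \<notin> L" and L: "L \<subseteq> {..<N}"
  shows "conv_prob P (\<lambda>m. corner_sum t L (M(l := m))) (corner_sum t (insert l L) M) at_top"
  unfolding conv_prob_def
proof (intro conjI allI impI)
  show "corner_sum t L (M(l := m)) \<in> borel_measurable P" "corner_sum t (insert l L) M \<in> borel_measurable P"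
    for m using t by simp_all
  fix e :: real assume "e > 0"
  define F where "F = {K\<in>Pow ({..<N} - L). l \<in> K}"
  have "F \<subseteq> Pow {..<N}" by (auto simp: F_def)
  show "((\<lambda>m. measure P {\<omega>\<in>space P. e < dist (corner_sum t L (M(l := m)) \<omega>) (corner_sum t (insert l L) M \<omega>)}) \<longlongrightarrow> 0) at_top"
  proof (rule tendsto_zero_nonnegI)
    fix \<delta> :: real assume "\<delta> > 0"
    then obtain K0 where K0: "\<And>F M. F \<subseteq> Pow {..<N} \<Longrightarrow> \<forall>K\<in>F. \<exists>l\<in>K. K0 \<le> M l \<Longrightarrow>
        measure P {\<omega>\<in>space P. e < norm (\<Sum>K\<in>F. (-1::real)^card K *\<^sub>R Y (corner t M K) \<omega>)} \<le> \<delta>"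
      using corner_terms_small[OF t \<open>e > 0\<close>] by blast
    show "eventually (\<lambda>m. measure P {\<omega>\<in>space P. e < dist (corner_sum t L (M(l := m)) \<omega>) (corner_sum t (insert l L) M \<omega>)} \<le> \<delta>) at_top"
    proof (rule eventually_mono[OF eventually_ge_at_top[of K0]])
      fix m assume "K0 \<le> m"
      have "dist (corner_sum t L (M(l := m)) \<omega>) (corner_sum t (insert l L) M \<omega>)
          = norm (\<Sum>K\<in>F. (-1::real)^card K *\<^sub>R Y (corner t (M(l := m)) K) \<omega>)" for \<omega>
        using corner_sum_insert[OF l, of t "M(l := m)" \<omega>] corner_sum_upd[of l "insert l L" t M m]
        by (simp add: dist_norm F_def)
      moreover have "\<forall>K\<in>F. \<exists>l'\<in>K. K0 \<le> (M(l := m)) l'"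
        using \<open>K0 \<le> m\<close> by (auto simp: F_def)
      ultimately show "measure P {\<omega>\<in>space P. e < dist (corner_sum t L (M(l := m)) \<omega>) (corner_sum t (insert l L) M \<omega>)} \<le> \<delta>"
        using K0[OF \<open>F \<subseteq> Pow {..<N}\<close>] by simp
    qed
  qed simp
qed

lemma ilim_corner_sum:
  assumes t: "t \<in> ZN N"
  shows "distinct ls \<Longrightarrow> set ls \<inter> L = {} \<Longrightarrow> set ls \<union> L = {..<N} \<Longrightarrow> ilim P ls (corner_sum t L) (Y t)"
proof (induction ls arbitrary: L)
  case Nil
  then show ?case by (simp add: corner_sum_all)
next
  case (Cons l ls)
  then have "ilim P ls (corner_sum t (insert l L)) (Y t)"
    by (intro Cons.IH) auto
  moreover have "conv_prob P (\<lambda>m. corner_sum t L (M(l := m))) (corner_sum t (insert l L) M) at_top" for M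
    using Cons.prems by (intro corner_sum_tendsto[OF t]) auto
  ultimately show ?case by auto
qed

lemma conv_prob_corner_sum_joint:
  assumes t: "t \<in> ZN N"
  shows "conv_prob P (corner_sum t {}) (Y t) (joint_at_top N)"
  unfolding conv_prob_def
proof (intro conjI allI impI)
  show "corner_sum t {} M \<in> borel_measurable P" "Y t \<in> borel_measurable P" for M
    using t by (simp_all add: Y_measurable)
  fix e :: real assume "e > 0"
  define F where "F = Pow {..<N} - {{}}"
  have "F \<subseteq> Pow {..<N}" by (auto simp: F_def)
  have diff: "dist (corner_sum t {} M \<omega>) (Y t \<omega>) = norm (\<Sum>K\<in>F. (-1::real)^card K *\<^sub>R Y (corner t M K) \<omega>)"
    for M \<omega>
    by (simp add: dist_norm corner_sum_def F_def sum_diff1)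
  show "((\<lambda>M. measure P {\<omega>\<in>space P. e < dist (corner_sum t {} M \<omega>) (Y t \<omega>)}) \<longlongrightarrow> 0) (joint_at_top N)"
  proof (rule tendsto_zero_nonnegI)
    fix \<delta> :: real assume "\<delta> > 0"
    then obtain K0 where K0: "\<And>F M. F \<subseteq> Pow {..<N} \<Longrightarrow> \<forall>K\<in>F. \<exists>l\<in>K. K0 \<le> M l \<Longrightarrow>
        measure P {\<omega>\<in>space P. e < norm (\<Sum>K\<in>F. (-1::real)^card K *\<^sub>R Y (corner t M K) \<omega>)} \<le> \<delta>"
      using corner_terms_small[OF t \<open>e > 0\<close>] by blast
    show "eventually (\<lambda>M. measure P {\<omega>\<in>space P. e < dist (corner_sum t {} M \<omega>) (Y t \<omega>)} \<le> \<delta>) (joint_at_top N)"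
    proof (rule eventually_mono[OF eventually_joint_at_top[where K=K0]])
      fix M assume "\<forall>l<N. K0 \<le> M l"
      then have "\<forall>K\<in>F. \<exists>l\<in>K. K0 \<le> M l" by (fastforce simp: F_def)
      then show "measure P {\<omega>\<in>space P. e < dist (corner_sum t {} M \<omega>) (Y t \<omega>)} \<le> \<delta>"
        unfolding diff by (rule K0[OF \<open>F \<subseteq> Pow {..<N}\<close>])
    qed
  qed simp
qed

lemma ilim_psum_any_order:
  assumes "t \<in> ZN N" "distinct ls" "set ls = {..<N}"
  shows "ilim P ls (psum N \<Theta> G t) (Y t)"
proof (cases ls)
  case Nil
  then have "ls = rev [0..<N]" using assms(3) by auto
  then show ?thesis using ilim_Y assms(1) by simp
next
  case (Cons l ls')
  have "ilim P ls (corner_sum t {}) (Y t)"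
    using assms by (intro ilim_corner_sum) auto
  moreover have "psum N \<Theta> G t M \<in> borel_measurable P" for M
    using assms(1) by (rule psum_measurable)
  ultimately show ?thesis
    unfolding Cons using psum_eq_corner_sum_AE[OF assms(1)] by (rule ilim_AE_cong)
qed

lemma conv_prob_psum_joint:
  assumes "t \<in> ZN N"
  shows "conv_prob P (psum N \<Theta> G t) (Y t) (joint_at_top N)"
  using conv_prob_corner_sum_joint[OF assms] psum_measurable[OF assms] psum_eq_corner_sum_AE[OF assms]
  by (rule conv_prob_AE_cong)

end

theorem mainTheorem6:
  fixes P :: "'a measure" and N :: nat and \<Theta> :: "nat \<Rightarrow> real^'n^'n"
    and G :: "(nat \<Rightarrow> int) \<Rightarrow> 'a \<Rightarrow> real^'n" and Y :: "(nat \<Rightarrow> int) \<Rightarrow> 'a \<Rightarrow> real^'n"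
  assumes "prob_space P"
    and "\<forall>l<N. sym_posdef (\<Theta> l)"
    and "\<forall>k<N. \<forall>l<N. \<Theta> k ** \<Theta> l = \<Theta> l ** \<Theta> k"
    and "G \<in> GTheta P N \<Theta>"
    and "\<forall>t\<in>ZN N. ilim P (rev [0..<N]) (psum N \<Theta> G t) (Y t)"
  shows "\<forall>t\<in>ZN N.
           (\<forall>ls. distinct ls \<and> set ls = {..<N} \<longrightarrow> ilim P ls (psum N \<Theta> G t) (Y t)) \<and>
           conv_prob P (psum N \<Theta> G t) (Y t) (joint_at_top N)"
proof -
  interpret GTheta_limit P N \<Theta> G Y
    by (rule GTheta_limit.intro[OF assms(1)], unfold_locales) (fact assms)+
  show ?thesis using ilim_psum_any_order conv_prob_psum_joint by blast
qed

end
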